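(* Let $\pi$ be a smooth representation of $G$. Then $\mathrm{Hom}_P(\mathrm{Sp},\pi)\cong\mathrm{Hom}_G(\mathrm{Ind}_P^G\mathbf 1,\pi)$, the isomorphism being restriction of $G$-maps to the $P$-subrepresentation $\kappa_{\mathbf 1}=\{f\in\mathrm{Ind}_P^G\mathbf 1: f(1)=0\}$, which maps isomorphically onto $\mathrm{Sp}|_P$.
   Context: $F$ non-Archimedean local field of residual characteristic $p$, $G=\mathrm{GL}_2(F)$, $P$ the upper triangular Borel subgroup. $\mathrm{Ind}_P^G\mathbf 1$ is the space of locally constant functions $f:G\to\overline{\mathbf F}_p$ with $f(bg)=f(g)$ for $b\in P$, with $G$ acting by right translation; it contains the constants $\mathbf 1$. $\mathrm{Sp}$ is defined by the exact sequence $0\to\mathbf 1\to\mathrm{Ind}_P^G\mathbf 1\to\mathrm{Sp}\to0$. Representations are smooth on $\overline{\mathbf F}_p$-vector spaces. *)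

theory Defs
  imports Main "HOL-Computational_Algebra.Polynomial"
begin

text \<open>v x is the (normalised, surjective) discrete valuation of x, meaningful for x \<noteq> 0;
  v 0 is irrelevant (0 has valuation +infinity, handled by vge).\<close>

definition vge :: "('f::field \<Rightarrow> int) \<Rightarrow> 'f \<Rightarrow> int \<Rightarrow> bool" where
  "vge v x n \<longleftrightarrow> x = 0 \<or> v x \<ge> n"

definition nonarch_local_field :: "('f::field \<Rightarrow> int) \<Rightarrow> nat \<Rightarrow> bool" where
  "nonarch_local_field v p \<longleftrightarrow>
     (\<forall>x y. x \<noteq> 0 \<longrightarrow> y \<noteq> 0 \<longrightarrow> v (x * y) = v x + v y) \<and>
     (\<forall>x y. x \<noteq> 0 \<longrightarrow> y \<noteq> 0 \<longrightarrow> x + y \<noteq> 0 \<longrightarrow> v (x + y) \<ge> min (v x) (v y)) \<and>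
     (\<exists>u. u \<noteq> 0 \<and> v u = 1) \<and>
     \<comment> \<open>completeness\<close>
     (\<forall>s :: nat \<Rightarrow> 'f. (\<forall>n. \<exists>N. \<forall>i\<ge>N. \<forall>j\<ge>N. vge v (s i - s j) n) \<longrightarrow>
        (\<exists>l. \<forall>n. \<exists>N. \<forall>i\<ge>N. vge v (s i - l) n)) \<and>
     \<comment> \<open>finite residue field O/m\<close>
     (\<exists>R. finite R \<and> (\<forall>r\<in>R. vge v r 0) \<and> (\<forall>x. vge v x 0 \<longrightarrow> (\<exists>r\<in>R. vge v (x - r) 1))) \<and>
     \<comment> \<open>residual characteristic p\<close>
     prime p \<and> vge v (of_nat p) 1"

definition alg_closure_Fp :: "'k::field itself \<Rightarrow> nat \<Rightarrow> bool" where
  "alg_closure_Fp _ p \<longleftrightarrow> prime p \<and> of_nat p = (0::'k) \<and>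
     (\<forall>q :: 'k poly. degree q > 0 \<longrightarrow> (\<exists>x. poly q x = 0)) \<and>
     (\<forall>x :: 'k. \<exists>n>0. x ^ (p ^ n) = x)"

text \<open>(a,b,c,d) stands for the matrix [[a,b],[c,d]].\<close>
type_synonym 'f m2 = "'f \<times> 'f \<times> 'f \<times> 'f"

fun m2mult :: "'f::comm_ring_1 m2 \<Rightarrow> 'f m2 \<Rightarrow> 'f m2" where
  "m2mult (a,b,c,d) (a',b',c',d') =
     (a*a' + b*c', a*b' + b*d', c*a' + d*c', c*b' + d*d')"

fun m2det :: "'f::comm_ring_1 m2 \<Rightarrow> 'f" where
  "m2det (a,b,c,d) = a*d - b*c"

definition m2one :: "'f::comm_ring_1 m2" where
  "m2one = (1,0,0,1)"

definition GL2 :: "'f::field m2 set" where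
  "GL2 = {g. m2det g \<noteq> 0}"

definition Bor :: "'f::field m2 set" where
  "Bor = {(a,b,c,d). c = 0 \<and> a * d \<noteq> 0}"

text \<open>g and h are close: all entries of g - h have valuation \<ge> n (basic neighbourhoods of the
  topology of GL_2(F) as a subspace of F^4).\<close>
fun near :: "('f::field \<Rightarrow> int) \<Rightarrow> int \<Rightarrow> 'f m2 \<Rightarrow> 'f m2 \<Rightarrow> bool" where
  "near v n (a,b,c,d) (a',b',c',d') \<longleftrightarrow>
     vge v (a - a') n \<and> vge v (b - b') n \<and> vge v (c - c') n \<and> vge v (d - d') n"

definition loc_const :: "('f::field \<Rightarrow> int) \<Rightarrow> ('f m2 \<Rightarrow> 'k) \<Rightarrow> bool" where
  "loc_const v f \<longleftrightarrow> (\<forall>g\<in>GL2. \<exists>n. \<forall>h\<in>GL2. near v n h g \<longrightarrow> f h = f g)"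

text \<open>Functions on G are represented as functions on all 2x2 matrices vanishing off GL2.\<close>
definition IndP1 :: "('f::field \<Rightarrow> int) \<Rightarrow> ('f m2 \<Rightarrow> 'k::field) set" where
  "IndP1 v = {f. (\<forall>g. g \<notin> GL2 \<longrightarrow> f g = 0) \<and>
                 (\<forall>b\<in>Bor. \<forall>g\<in>GL2. f (m2mult b g) = f g) \<and> loc_const v f}"

definition oneG :: "'f::field m2 \<Rightarrow> 'k::field" where
  "oneG g = (if g \<in> GL2 then 1 else 0)"

definition rtrans :: "'f::field m2 \<Rightarrow> ('f m2 \<Rightarrow> 'k::field) \<Rightarrow> ('f m2 \<Rightarrow> 'k)" where
  "rtrans g f = (\<lambda>x. if x \<in> GL2 then f (m2mult x g) else 0)"

definition kappa1 :: "('f::field \<Rightarrow> int) \<Rightarrow> ('f m2 \<Rightarrow> 'k::field) set" where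
  "kappa1 v = {f \<in> IndP1 v. f m2one = 0}"

text \<open>Class of f in Sp = Ind / constants (a coset of the line of constants).\<close>
definition sp_class :: "('f::field m2 \<Rightarrow> 'k::field) \<Rightarrow> ('f m2 \<Rightarrow> 'k) set" where
  "sp_class f = {(\<lambda>x. f x + c * oneG x) | c. True}"

definition Sp :: "('f::field \<Rightarrow> int) \<Rightarrow> ('f m2 \<Rightarrow> 'k::field) set set" where
  "Sp v = sp_class ` IndP1 v"

definition smooth_rep :: "('f::field \<Rightarrow> int) \<Rightarrow> ('k::field \<Rightarrow> 'w::ab_group_add \<Rightarrow> 'w)
    \<Rightarrow> ('f m2 \<Rightarrow> 'w \<Rightarrow> 'w) \<Rightarrow> bool" where
  "smooth_rep v scale act \<longleftrightarrow> module scale \<and>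
     (\<forall>g\<in>GL2. \<forall>x y. act g (x + y) = act g x + act g y) \<and>
     (\<forall>g\<in>GL2. \<forall>c x. act g (scale c x) = scale c (act g x)) \<and>
     (\<forall>x. act m2one x = x) \<and>
     (\<forall>g\<in>GL2. \<forall>h\<in>GL2. \<forall>x. act (m2mult g h) x = act g (act h x)) \<and>
     (\<forall>x. \<exists>n. \<forall>g\<in>GL2. near v n g m2one \<longrightarrow> act g x = x)"

definition lin_on :: "('f m2 \<Rightarrow> 'k::field) set \<Rightarrow> ('k \<Rightarrow> 'w::ab_group_add \<Rightarrow> 'w)
    \<Rightarrow> (('f m2 \<Rightarrow> 'k) \<Rightarrow> 'w) \<Rightarrow> bool" where
  "lin_on A scale \<Phi> \<longleftrightarrow>
     (\<forall>f\<in>A. \<forall>g\<in>A. \<Phi> (\<lambda>x. f x + g x) = \<Phi> f + \<Phi> g) \<and>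
     (\<forall>c. \<forall>f\<in>A. \<Phi> (\<lambda>x. c * f x) = scale c (\<Phi> f))"

text \<open>Hom_H(A, pi) for an H-stable subspace A of Ind (maps are 0 outside A).\<close>
definition HomOn :: "'f::field m2 set \<Rightarrow> ('f m2 \<Rightarrow> 'k::field) set \<Rightarrow> ('k \<Rightarrow> 'w::ab_group_add \<Rightarrow> 'w)
    \<Rightarrow> ('f m2 \<Rightarrow> 'w \<Rightarrow> 'w) \<Rightarrow> (('f m2 \<Rightarrow> 'k) \<Rightarrow> 'w) set" where
  "HomOn H A scale act = {\<Phi>. lin_on A scale \<Phi> \<and>
     (\<forall>h\<in>H. \<forall>f\<in>A. \<Phi> (rtrans h f) = act h (\<Phi> f)) \<and> (\<forall>f. f \<notin> A \<longrightarrow> \<Phi> f = 0)}"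

text \<open>Hom_P(Sp, pi), via the universal property of the quotient Sp = Ind / constants:
  P-maps on Ind killing the constants.\<close>
definition HomP_Sp :: "('f::field \<Rightarrow> int) \<Rightarrow> ('k::field \<Rightarrow> 'w::ab_group_add \<Rightarrow> 'w)
    \<Rightarrow> ('f m2 \<Rightarrow> 'w \<Rightarrow> 'w) \<Rightarrow> (('f m2 \<Rightarrow> 'k) \<Rightarrow> 'w) set" where
  "HomP_Sp v scale act = {\<psi> \<in> HomOn Bor (IndP1 v) scale act. \<psi> oneG = 0}"

end

(*
  Restriction to kappa1 is injective on Hom_G(Ind 1, pi) because Ind 1 = kappa1 + weyl kappa1:
  every f splits as f e + f (1 - e), where e is the indicator of the cosets P g whose line
  (c : d) has integral affine coordinate d / c; f e vanishes at 1 and f (1 - e) at weyl.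

  Conversely, a P-map psi on kappa1 extends to Ind 1 by psi_ext f = t^-1 psi (t f) for any t
  with f t = 0, and G_ext f = psi_ext (f e) + psi_ext (f (1 - e)) is G-equivariant. That
  psi_ext does not depend on t reduces, via the Bruhat decomposition, to psi (weyl h) =
  weyl psi h for h vanishing at 1 and at weyl. Such an h is supported on a compact part of
  the affine line. Cutting it into small balls (compactness of the integers, from completeness
  and the finite residue field) reduces this to indicators of small balls around y <> 0; there
  weyl a = b n with b in P and n lower unipotent, so close to 1 that n fixes e and, by
  smoothness, psi e.

  The statement on Sp is the universal property of the quotient by the constants, since
  f - f 1 lies in kappa1.
*)

theory Submission
  imports Defs
begin

section \<open>The valuation\<close>

locale local_field =
  fixes v :: "'f::field \<Rightarrow> int" and p :: nat
  assumes nonarch_local_field: "nonarch_local_field v p"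
begin

lemma val_mult: "x \<noteq> 0 \<Longrightarrow> y \<noteq> 0 \<Longrightarrow> v (x * y) = v x + v y"
  using nonarch_local_field unfolding nonarch_local_field_def by blast

lemma val_ultrametric: "x \<noteq> 0 \<Longrightarrow> y \<noteq> 0 \<Longrightarrow> x + y \<noteq> 0 \<Longrightarrow> min (v x) (v y) \<le> v (x + y)"
  using nonarch_local_field unfolding nonarch_local_field_def by blast

lemma exists_uniformizer: "\<exists>u. u \<noteq> 0 \<and> v u = 1"
  using nonarch_local_field unfolding nonarch_local_field_def by blast

lemma cauchy_converges:
  fixes s :: "nat \<Rightarrow> 'f"
  assumes "\<forall>n. \<exists>N. \<forall>i\<ge>N. \<forall>j\<ge>N. vge v (s i - s j) n"
  shows "\<exists>l. \<forall>n. \<exists>N. \<forall>i\<ge>N. vge v (s i - l) n"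
  using nonarch_local_field[unfolded nonarch_local_field_def, THEN conjunct2, THEN conjunct2,
      THEN conjunct2, THEN conjunct1, THEN spec[of _ s]] assms
  by (rule mp)

lemma finite_residue_representatives:
  "\<exists>R. finite R \<and> (\<forall>r\<in>R. vge v r 0) \<and> (\<forall>x. vge v x 0 \<longrightarrow> (\<exists>r\<in>R. vge v (x - r) 1))"
  using nonarch_local_field unfolding nonarch_local_field_def by blast

lemma val_one: "v 1 = 0"
  using val_mult[of 1 1] by simp

lemma val_inverse: "x \<noteq> 0 \<Longrightarrow> v (inverse x) = - v x"
  using val_mult[of x "inverse x"] val_one by simp

lemma val_uminus: "x \<noteq> 0 \<Longrightarrow> v (- x) = v x"
  using val_mult[of "-1" "-1"] val_mult[of "-1" x] val_one by simp

lemma val_divide: "x \<noteq> 0 \<Longrightarrow> y \<noteq> 0 \<Longrightarrow> v (x / y) = v x - v y"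
  using val_mult[of x "inverse y"] val_inverse[of y] by (simp add: divide_inverse)

lemma vge_zero [simp]: "vge v 0 n"
  by (simp add: vge_def)

lemma vge_iff: "x \<noteq> 0 \<Longrightarrow> vge v x n \<longleftrightarrow> n \<le> v x"
  by (simp add: vge_def)

lemma vge_mono: "vge v x n \<Longrightarrow> m \<le> n \<Longrightarrow> vge v x m"
  by (auto simp: vge_def)

lemma vge_add: "vge v x n \<Longrightarrow> vge v y n \<Longrightarrow> vge v (x + y) n"
  using val_ultrametric[of x y] by (force simp: vge_def)

lemma vge_uminus [simp]: "vge v (- x) n \<longleftrightarrow> vge v x n"
  by (cases "x = 0") (auto simp: vge_def val_uminus)

lemma vge_diff: "vge v x n \<Longrightarrow> vge v y n \<Longrightarrow> vge v (x - y) n"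
  using vge_add[of x n "- y"] by simp

lemma vge_add_right_iff: "vge v e n \<Longrightarrow> vge v (x + e) n \<longleftrightarrow> vge v x n"
  using vge_add[of x n e] vge_diff[of "x + e" n e] by auto

lemma vge_diff_commute: "vge v (x - y) n \<longleftrightarrow> vge v (y - x) n"
  using vge_uminus[of "x - y" n] by simp

lemma vge_mult: "vge v x n \<Longrightarrow> vge v y m \<Longrightarrow> vge v (x * y) (n + m)"
  by (cases "x = 0"; cases "y = 0") (auto simp: vge_def val_mult)

lemma vge_divide_iff: "y \<noteq> 0 \<Longrightarrow> vge v (x / y) n \<longleftrightarrow> vge v x (n + v y)"
  by (cases "x = 0") (auto simp: vge_def val_divide)

lemma val_add_small:
  assumes "x \<noteq> 0" "vge v e (v x + 1)"
  shows "x + e \<noteq> 0 \<and> v (x + e) = v x"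
proof (cases "e = 0")
  case False
  then have ve: "v x + 1 \<le> v e" using assms by (simp add: vge_def)
  have ne: "x + e \<noteq> 0"
  proof
    assume "x + e = 0"
    then have "v e = v x" using val_uminus assms by (simp add: add_eq_0_iff2)
    then show False using ve by simp
  qed
  have "v x \<le> v (x + e)" using val_ultrametric[OF assms(1) False ne] ve by simp
  moreover have "v (x + e) \<le> v x"
  proof -
    have "min (v (x + e)) (v (- e)) \<le> v (x + e + - e)"
      using val_ultrametric[OF ne, of "- e"] assms(1) False by simp
    then show ?thesis using val_uminus[OF False] ve by simp
  qed
  ultimately show ?thesis using ne by simp
qed (use assms in simp)

definition elem_of_val :: "int \<Rightarrow> 'f" where
  "elem_of_val k = (SOME x. x \<noteq> 0 \<and> v x = k)"

lemma elem_of_val: "elem_of_val k \<noteq> 0" "v (elem_of_val k) = k"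
proof -
  obtain u where u: "u \<noteq> 0" "v u = 1" using exists_uniformizer by blast
  have upow: "u ^ n \<noteq> 0 \<and> v (u ^ n) = int n" for n
    by (induction n) (auto simp: val_one val_mult u)
  have ex: "\<exists>x. x \<noteq> 0 \<and> v x = k"
  proof (cases "0 \<le> k")
    case True then show ?thesis using upow[of "nat k"] by (intro exI[of _ "u ^ nat k"]) simp
  next
    case False then show ?thesis using upow[of "nat (- k)"] val_inverse
      by (intro exI[of _ "inverse (u ^ nat (- k))"]) simp
  qed
  then show "elem_of_val k \<noteq> 0" "v (elem_of_val k) = k"
    using someI_ex[OF ex] unfolding elem_of_val_def by auto
qed

end

section \<open>GL2, its Borel subgroup and right translation\<close>

lemma m2mult_assoc: "m2mult (m2mult x y) z = m2mult x (m2mult (y::'f::comm_ring_1 m2) z)"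
  by (cases x rule: prod_cases4; cases y rule: prod_cases4; cases z rule: prod_cases4)
     (simp add: algebra_simps)

lemma m2det_mult: "m2det (m2mult x y) = m2det x * m2det (y::'f::comm_ring_1 m2)"
  by (cases x rule: prod_cases4; cases y rule: prod_cases4) (simp add: algebra_simps)

lemma m2one_mult [simp]: "m2mult m2one x = (x::'f::comm_ring_1 m2)"
  by (cases x rule: prod_cases4) (simp add: m2one_def)

lemma mult_m2one [simp]: "m2mult x m2one = (x::'f::comm_ring_1 m2)"
  by (cases x rule: prod_cases4) (simp add: m2one_def)

lemma GL2_mult: "x \<in> GL2 \<Longrightarrow> y \<in> GL2 \<Longrightarrow> m2mult x y \<in> (GL2::'f::field m2 set)"
  by (simp add: GL2_def m2det_mult)

lemma m2one_GL2 [simp]: "m2one \<in> (GL2::'f::field m2 set)"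
  by (simp add: GL2_def m2one_def)

lemma Bor_GL2: "x \<in> Bor \<Longrightarrow> x \<in> (GL2::'f::field m2 set)"
  by (auto simp: Bor_def GL2_def)

lemma Bor_iff_GL2: "(a, b, 0, d) \<in> Bor \<longleftrightarrow> (a, b, 0, d) \<in> (GL2::'f::field m2 set)"
  by (simp add: Bor_def GL2_def)

definition m2inv :: "'f::field m2 \<Rightarrow> 'f m2" where
  "m2inv x = (case x of (a, b, c, d) \<Rightarrow> let \<delta> = inverse (a * d - b * c) in
     (d * \<delta>, - b * \<delta>, - c * \<delta>, a * \<delta>))"

lemma m2inv_mult: "x \<in> GL2 \<Longrightarrow> m2mult (m2inv x) x = m2one"
  and m2mult_inv: "x \<in> GL2 \<Longrightarrow> m2mult x (m2inv x) = m2one"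
proof -
  assume "x \<in> GL2"
  moreover obtain a b c d where x: "x = (a, b, c, d)" by (cases x rule: prod_cases4)
  ultimately have "(a * d - b * c) * inverse (a * d - b * c) = 1" by (simp add: GL2_def)
  then show "m2mult (m2inv x) x = m2one" "m2mult x (m2inv x) = m2one"
    unfolding x m2inv_def m2one_def Let_def by (simp, algebra)+
qed

lemma m2inv_mult_cancel: "x \<in> GL2 \<Longrightarrow> m2mult (m2inv x) (m2mult x y) = y"
  by (simp add: m2mult_assoc[symmetric] m2inv_mult)

lemma m2inv_unique:
  assumes "x \<in> GL2" "m2mult y x = m2one"
  shows "m2inv x = y"
proof -
  have "y = m2mult (m2mult y x) (m2inv x)" by (simp add: m2mult_assoc m2mult_inv[OF assms(1)])
  then show ?thesis by (simp add: assms(2))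
qed

lemma m2inv_GL2: "x \<in> GL2 \<Longrightarrow> m2inv x \<in> GL2"
  using m2det_mult[of x "m2inv x"] m2mult_inv[of x] by (auto simp: GL2_def m2one_def)

definition weyl :: "'f::field m2" where
  "weyl = (0, 1, 1, 0)"

lemma weyl_GL2 [simp]: "weyl \<in> GL2"
  by (simp add: weyl_def GL2_def)

lemma weyl_weyl: "m2mult weyl weyl = (m2one :: 'f::field m2)"
  by (simp add: weyl_def m2one_def)

lemma bruhat_decomposition:
  assumes "(a, b, c, d) \<in> GL2" "c \<noteq> (0::'f::field)"
  shows "(a, b, c, d) = m2mult (- (a * d - b * c) / c, a / c, 0, 1) (m2mult weyl (c, d, 0, 1))"
    and "(- (a * d - b * c) / c, a / c, 0, 1) \<in> Bor" "(c, d, 0, 1) \<in> Bor"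
  using assms by (simp_all add: weyl_def Bor_def GL2_def field_simps)

lemma rtrans_apply: "x \<in> GL2 \<Longrightarrow> rtrans g f x = f (m2mult x g)"
  by (simp add: rtrans_def)

lemma rtrans_outside: "x \<notin> GL2 \<Longrightarrow> rtrans g f x = 0"
  by (simp add: rtrans_def)

lemma rtrans_rtrans:
  "g \<in> GL2 \<Longrightarrow> rtrans g (rtrans h f) = rtrans (m2mult g h) (f::'f::field m2 \<Rightarrow> 'k::field)"
  by (rule ext) (simp add: rtrans_def GL2_mult m2mult_assoc)

lemma rtrans_m2one:
  "(\<And>x. x \<notin> GL2 \<Longrightarrow> f x = 0) \<Longrightarrow> rtrans m2one (f::'f::field m2 \<Rightarrow> 'k::field) = f"
  by (rule ext) (simp add: rtrans_def)

lemma rtrans_add: "rtrans g (\<lambda>x. f x + h x) = (\<lambda>x. rtrans g f x + rtrans g h x)"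
  and rtrans_diff: "rtrans g (\<lambda>x. f x - h x) = (\<lambda>x. rtrans g f x - rtrans g h x)"
  and rtrans_mult: "rtrans g (\<lambda>x. f x * h x) = (\<lambda>x. rtrans g f x * rtrans g h x)"
  and rtrans_cmult: "rtrans g (\<lambda>x. c * f x) = (\<lambda>x. c * rtrans g f x)"
  and rtrans_zero: "rtrans g (\<lambda>x. 0) = (\<lambda>x. 0)"
  by (rule ext, simp add: rtrans_def)+

lemma rtrans_oneG: "g \<in> GL2 \<Longrightarrow> rtrans g oneG = oneG"
  by (rule ext) (simp add: rtrans_def oneG_def GL2_mult)

lemma HomOn_add: "\<Phi> \<in> HomOn H A scale act \<Longrightarrow> f \<in> A \<Longrightarrow> g \<in> A \<Longrightarrow> \<Phi> (\<lambda>x. f x + g x) = \<Phi> f + \<Phi> g"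
  and HomOn_cmult: "\<Phi> \<in> HomOn H A scale act \<Longrightarrow> f \<in> A \<Longrightarrow> \<Phi> (\<lambda>x. c * f x) = scale c (\<Phi> f)"
  and HomOn_rtrans: "\<Phi> \<in> HomOn H A scale act \<Longrightarrow> h \<in> H \<Longrightarrow> f \<in> A \<Longrightarrow> \<Phi> (rtrans h f) = act h (\<Phi> f)"
  and HomOn_outside: "\<Phi> \<in> HomOn H A scale act \<Longrightarrow> f \<notin> A \<Longrightarrow> \<Phi> f = 0"
  unfolding HomOn_def lin_on_def by blast+

lemma HomOn_zero: "\<Phi> \<in> HomOn H A scale act \<Longrightarrow> (\<lambda>x. 0) \<in> A \<Longrightarrow> \<Phi> (\<lambda>x. 0) = 0"
  using HomOn_add[where f = "\<lambda>x. 0" and g = "\<lambda>x. 0"] by simp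

lemma HomOn_restrict:
  assumes \<Phi>: "\<Phi> \<in> HomOn H A scale act" and "A' \<subseteq> A" "H' \<subseteq> H"
    and add: "\<And>f g. f \<in> A' \<Longrightarrow> g \<in> A' \<Longrightarrow> (\<lambda>x. f x + g x) \<in> A'"
    and cmult: "\<And>c f. f \<in> A' \<Longrightarrow> (\<lambda>x. c * f x) \<in> A'"
    and rtrans: "\<And>h f. h \<in> H' \<Longrightarrow> f \<in> A' \<Longrightarrow> rtrans h f \<in> A'"
  shows "(\<lambda>f. if f \<in> A' then \<Phi> f else 0) \<in> HomOn H' A' scale act"
  unfolding HomOn_def[of H'] lin_on_def mem_Collect_eq
proof (intro conjI allI ballI impI)
  show "(if (\<lambda>x. f x + g x) \<in> A' then \<Phi> (\<lambda>x. f x + g x) else 0)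
    = (if f \<in> A' then \<Phi> f else 0) + (if g \<in> A' then \<Phi> g else 0)" if "f \<in> A'" "g \<in> A'" for f g
    using that add HomOn_add[OF \<Phi>] subsetD[OF \<open>A' \<subseteq> A\<close>] by simp
  show "(if (\<lambda>x. c * f x) \<in> A' then \<Phi> (\<lambda>x. c * f x) else 0) = scale c (if f \<in> A' then \<Phi> f else 0)"
    if "f \<in> A'" for c f
    using that cmult HomOn_cmult[OF \<Phi>] subsetD[OF \<open>A' \<subseteq> A\<close>] by simp
  show "(if rtrans h f \<in> A' then \<Phi> (rtrans h f) else 0) = act h (if f \<in> A' then \<Phi> f else 0)"
    if "h \<in> H'" "f \<in> A'" for h f
    using that rtrans HomOn_rtrans[OF \<Phi>] subsetD[OF \<open>A' \<subseteq> A\<close>] subsetD[OF \<open>H' \<subseteq> H\<close>]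
    by simp
  show "(if f \<in> A' then \<Phi> f else 0) = 0" if "f \<notin> A'" for f
    using that by simp
qed

context local_field
begin

section \<open>The induced representation and Sp\<close>

lemma near_mono: "near v n h g \<Longrightarrow> m \<le> n \<Longrightarrow> near v m h g"
  by (cases h rule: prod_cases4; cases g rule: prod_cases4) (auto intro: vge_mono)

lemma IndP1_outside: "f \<in> IndP1 v \<Longrightarrow> g \<notin> GL2 \<Longrightarrow> f g = 0"
  and IndP1_left_invariant: "f \<in> IndP1 v \<Longrightarrow> b \<in> Bor \<Longrightarrow> g \<in> GL2 \<Longrightarrow> f (m2mult b g) = f g"
  and IndP1_locally_constant:
    "f \<in> IndP1 v \<Longrightarrow> g \<in> GL2 \<Longrightarrow> \<exists>n. \<forall>h\<in>GL2. near v n h g \<longrightarrow> f h = f g"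
  unfolding IndP1_def loc_const_def by blast+

lemma IndP1_pointwise:
  assumes f: "f \<in> IndP1 v" and h: "h \<in> IndP1 v" and "F 0 0 = 0"
  shows "(\<lambda>x. F (f x) (h x)) \<in> IndP1 v"
proof -
  have "loc_const v (\<lambda>x. F (f x) (h x))"
    unfolding loc_const_def
  proof
    fix g :: "'f m2" assume g: "g \<in> GL2"
    obtain n1 where n1: "\<forall>y\<in>GL2. near v n1 y g \<longrightarrow> f y = f g"
      using IndP1_locally_constant[OF f g] by blast
    obtain n2 where n2: "\<forall>y\<in>GL2. near v n2 y g \<longrightarrow> h y = h g"
      using IndP1_locally_constant[OF h g] by blast
    show "\<exists>n. \<forall>y\<in>GL2. near v n y g \<longrightarrow> F (f y) (h y) = F (f g) (h g)"
      by (rule exI[of _ "max n1 n2"]) (metis n1 n2 near_mono max.cobounded1 max.cobounded2)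
  qed
  then show ?thesis using assms by (simp add: IndP1_def)
qed

lemma IndP1_add: "f \<in> IndP1 v \<Longrightarrow> h \<in> IndP1 v \<Longrightarrow> (\<lambda>x. f x + h x) \<in> IndP1 v"
  and IndP1_diff: "f \<in> IndP1 v \<Longrightarrow> h \<in> IndP1 v \<Longrightarrow> (\<lambda>x. f x - h x) \<in> IndP1 v"
  and IndP1_mult: "f \<in> IndP1 v \<Longrightarrow> h \<in> IndP1 v \<Longrightarrow> (\<lambda>x. f x * h x) \<in> IndP1 v"
  using IndP1_pointwise[of f h plus] IndP1_pointwise[of f h minus] IndP1_pointwise[of f h times]
  by simp_all

lemma IndP1_cmult: "f \<in> IndP1 v \<Longrightarrow> (\<lambda>x. c * f x) \<in> IndP1 v"
  using IndP1_pointwise[of f f "\<lambda>a b. c * a"] by simp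

lemma oneG_IndP1: "oneG \<in> IndP1 v"
  by (auto simp: IndP1_def oneG_def loc_const_def GL2_mult Bor_GL2)

lemma zero_IndP1: "(\<lambda>x. 0) \<in> IndP1 v"
  by (auto simp: IndP1_def loc_const_def)

lemma near_mult_right:
  assumes "near v n x y" "vge v a' m" "vge v b' m" "vge v c' m" "vge v d' m"
  shows "near v (n + m) (m2mult x (a', b', c', d')) (m2mult y (a', b', c', d'))"
proof -
  obtain a b c d where x: "x = (a, b, c, d)" by (cases x rule: prod_cases4)
  obtain a\<^sub>0 b\<^sub>0 c\<^sub>0 d\<^sub>0 where y: "y = (a\<^sub>0, b\<^sub>0, c\<^sub>0, d\<^sub>0)" by (cases y rule: prod_cases4)
  have "vge v (a - a\<^sub>0) n" "vge v (b - b\<^sub>0) n" "vge v (c - c\<^sub>0) n" "vge v (d - d\<^sub>0) n"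
    using assms(1) x y by auto
  moreover have "a * a' + b * c' - (a\<^sub>0 * a' + b\<^sub>0 * c') = (a - a\<^sub>0) * a' + (b - b\<^sub>0) * c'"
    "a * b' + b * d' - (a\<^sub>0 * b' + b\<^sub>0 * d') = (a - a\<^sub>0) * b' + (b - b\<^sub>0) * d'"
    "c * a' + d * c' - (c\<^sub>0 * a' + d\<^sub>0 * c') = (c - c\<^sub>0) * a' + (d - d\<^sub>0) * c'"
    "c * b' + d * d' - (c\<^sub>0 * b' + d\<^sub>0 * d') = (c - c\<^sub>0) * b' + (d - d\<^sub>0) * d'"
    by (simp_all add: algebra_simps)
  ultimately show ?thesis
    unfolding x y using assms(2-5) by (simp only: m2mult.simps near.simps) (intro conjI vge_add vge_mult)
qed

lemma IndP1_rtrans: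
  assumes f: "f \<in> IndP1 v" and g: "g \<in> GL2"
  shows "rtrans g f \<in> IndP1 v"
proof -
  obtain a' b' c' d' where g_eq: "g = (a', b', c', d')" by (cases g rule: prod_cases4)
  define m where "m = min (min (v a') (v b')) (min (v c') (v d'))"
  have m: "vge v a' m" "vge v b' m" "vge v c' m" "vge v d' m"
    unfolding vge_def m_def by auto
  have "loc_const v (rtrans g f)"
    unfolding loc_const_def
  proof
    fix x :: "'f m2" assume x: "x \<in> GL2"
    obtain n where n: "\<forall>y\<in>GL2. near v n y (m2mult x g) \<longrightarrow> f y = f (m2mult x g)"
      using IndP1_locally_constant[OF f GL2_mult[OF x g]] by blast
    show "\<exists>n. \<forall>y\<in>GL2. near v n y x \<longrightarrow> rtrans g f y = rtrans g f x"
    proof (intro exI[of _ "n - m"] ballI impI)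
      fix y :: "'f m2" assume y: "y \<in> GL2" "near v (n - m) y x"
      have "near v (n - m + m) (m2mult y g) (m2mult x g)"
        unfolding g_eq by (rule near_mult_right[OF y(2) m])
      then show "rtrans g f y = rtrans g f x"
        using n GL2_mult[OF y(1) g] x y by (simp add: rtrans_apply)
    qed
  qed
  moreover have "\<forall>b\<in>Bor. \<forall>y\<in>GL2. rtrans g f (m2mult b y) = rtrans g f y"
    using IndP1_left_invariant[OF f] by (simp add: rtrans_apply GL2_mult Bor_GL2 g m2mult_assoc)
  ultimately show ?thesis by (simp add: IndP1_def rtrans_outside)
qed

lemma IndP1_upper_triangular: "f \<in> IndP1 v \<Longrightarrow> (a, b, 0, d) \<in> GL2 \<Longrightarrow> f (a, b, 0, d) = f m2one"
  using IndP1_left_invariant[of f "(a, b, 0, d)" m2one] Bor_iff_GL2 by (metis m2one_GL2 mult_m2one)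

text \<open>The coset P g of g = (a, b, c, d) is determined by the point (c : d) of the projective
  line; chart y is the representative of its affine point y = d / c.\<close>

definition chart :: "'f \<Rightarrow> 'f m2" where
  "chart y = (0, 1, 1, y)"

lemma chart_GL2: "chart y \<in> GL2"
  by (simp add: chart_def GL2_def)

lemma chart_zero: "chart 0 = weyl"
  by (simp add: chart_def weyl_def)

lemma near_chart: "near v n (chart y) (chart y\<^sub>0) \<longleftrightarrow> vge v (y - y\<^sub>0) n"
  by (simp add: chart_def)

lemma IndP1_eq_chart:
  assumes f: "f \<in> IndP1 v" and x: "(a, b, c, d) \<in> GL2" and c: "c \<noteq> 0"
  shows "f (a, b, c, d) = f (chart (d / c))"
proof -
  have "(b - a * d / c) * c = b * c - a * d" using c by (simp add: field_simps)
  then have "(b - a * d / c, a, 0, c) \<in> Bor" using x c by (auto simp: Bor_def GL2_def)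
  moreover have "m2mult (b - a * d / c, a, 0, c) (chart (d / c)) = (a, b, c, d)"
    using c by (simp add: chart_def field_simps)
  ultimately show ?thesis using IndP1_left_invariant[OF f _ chart_GL2] by metis
qed

lemma kappa1_iff: "f \<in> kappa1 v \<longleftrightarrow> f \<in> IndP1 v \<and> f m2one = 0"
  by (simp add: kappa1_def)

lemma kappa1_IndP1: "f \<in> kappa1 v \<Longrightarrow> f \<in> IndP1 v"
  by (simp add: kappa1_iff)

lemma zero_kappa1: "(\<lambda>x. 0) \<in> kappa1 v"
  by (simp add: kappa1_iff zero_IndP1)

lemma kappa1_add: "f \<in> kappa1 v \<Longrightarrow> g \<in> kappa1 v \<Longrightarrow> (\<lambda>x. f x + g x) \<in> kappa1 v"
  and kappa1_cmult: "f \<in> kappa1 v \<Longrightarrow> (\<lambda>x. c * f x) \<in> kappa1 v"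
  by (simp_all add: kappa1_iff IndP1_add IndP1_cmult)

lemma rtrans_kappa1: "f \<in> IndP1 v \<Longrightarrow> g \<in> GL2 \<Longrightarrow> f g = 0 \<Longrightarrow> rtrans g f \<in> kappa1 v"
  by (simp add: kappa1_iff IndP1_rtrans rtrans_apply)

lemma kappa1_rtrans_Bor: "b \<in> Bor \<Longrightarrow> f \<in> kappa1 v \<Longrightarrow> rtrans b f \<in> kappa1 v"
  using rtrans_kappa1[of f b] IndP1_left_invariant[of f b m2one] Bor_GL2[of b]
  by (simp add: kappa1_iff)

definition kappa1_part :: "('f m2 \<Rightarrow> 'k::field) \<Rightarrow> 'f m2 \<Rightarrow> 'k" where
  "kappa1_part f = (\<lambda>x. f x - f m2one * oneG x)"

lemma kappa1_part_kappa1: "f \<in> IndP1 v \<Longrightarrow> kappa1_part f \<in> kappa1 v"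
  unfolding kappa1_part_def kappa1_iff
  using IndP1_diff[OF _ IndP1_cmult[OF oneG_IndP1]] by (simp add: oneG_def)

lemma kappa1_part_id: "f \<in> kappa1 v \<Longrightarrow> kappa1_part f = f"
  by (simp add: kappa1_part_def kappa1_iff)

lemma kappa1_part_oneG: "kappa1_part oneG = (\<lambda>x. 0)"
  by (simp add: kappa1_part_def oneG_def)

lemma kappa1_part_add: "kappa1_part (\<lambda>x. f x + g x) = (\<lambda>x. kappa1_part f x + kappa1_part g x)"
  and kappa1_part_cmult: "kappa1_part (\<lambda>x. c * f x) = (\<lambda>x. c * kappa1_part f x)"
  by (simp_all add: kappa1_part_def fun_eq_iff algebra_simps)

lemma kappa1_part_rtrans_Bor:
  "f \<in> IndP1 v \<Longrightarrow> b \<in> Bor \<Longrightarrow> kappa1_part (rtrans b f) = rtrans b (kappa1_part f)"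
  using IndP1_left_invariant[of f b m2one] Bor_GL2[of b]
  by (simp add: kappa1_part_def rtrans_diff rtrans_cmult rtrans_oneG rtrans_apply)

lemma sp_class_shift: "sp_class (\<lambda>x. f x + c * oneG x) = sp_class f"
proof -
  have "(\<lambda>x. f x + c * oneG x + d * oneG x) = (\<lambda>x. f x + (c + d) * oneG x)"
    and "(\<lambda>x. f x + d * oneG x) = (\<lambda>x. f x + c * oneG x + (d - c) * oneG x)" for d
    by (simp_all add: fun_eq_iff algebra_simps)
  then show ?thesis unfolding sp_class_def by blast
qed

lemma sp_class_bij: "bij_betw sp_class (kappa1 v :: ('f m2 \<Rightarrow> 'k::field) set) (Sp v)"
proof (rule bij_betwI')
  fix f g :: "'f m2 \<Rightarrow> 'k"
  assume f: "f \<in> kappa1 v" and g: "g \<in> kappa1 v"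
  show "sp_class f = sp_class g \<longleftrightarrow> f = g"
  proof
    assume "sp_class f = sp_class g"
    moreover have "f \<in> sp_class f" unfolding sp_class_def by (intro CollectI exI[of _ 0]) simp
    ultimately obtain c where c: "f = (\<lambda>x. g x + c * oneG x)" unfolding sp_class_def by blast
    then have "c = 0" using fun_cong[OF c, of m2one] f g by (simp add: kappa1_iff oneG_def)
    then show "f = g" using c by simp
  qed simp
next
  show "sp_class f \<in> Sp v" if "f \<in> kappa1 v" for f :: "'f m2 \<Rightarrow> 'k"
    using that unfolding Sp_def kappa1_iff by blast
next
  fix X assume "X \<in> (Sp v :: ('f m2 \<Rightarrow> 'k) set set)"
  then obtain f where f: "f \<in> IndP1 v" and X: "X = sp_class f" unfolding Sp_def by blast
  have "sp_class (kappa1_part f) = sp_class f"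
    using sp_class_shift[of f "- f m2one"] by (simp add: kappa1_part_def)
  then show "\<exists>f\<in>kappa1 v. X = sp_class f" using kappa1_part_kappa1[OF f] X by metis
qed

section \<open>Balls in the projective line\<close>

text \<open>In the affine coordinate d / c of the line (c : d) of g = (a, b, c, d), inball \<beta> k is
  the ball \<beta> + \<pi>^k O; the point at infinity c = 0 lies in no ball.\<close>

definition inball :: "'f \<Rightarrow> int \<Rightarrow> 'f m2 \<Rightarrow> bool" where
  "inball \<beta> k x = (case x of (a, b, c, d) \<Rightarrow> c \<noteq> 0 \<and> vge v (d / c - \<beta>) k)"

definition ballf :: "'f \<Rightarrow> int \<Rightarrow> 'f m2 \<Rightarrow> 'k::field" where
  "ballf \<beta> k x = (if x \<in> GL2 \<and> inball \<beta> k x then 1 else 0)"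

lemma inball_simp [simp]: "inball \<beta> k (a, b, c, d) \<longleftrightarrow> c \<noteq> 0 \<and> vge v (d / c - \<beta>) k"
  by (simp add: inball_def)

lemma inball_zero_zero_iff: "inball 0 0 (a, b, c, d) \<longleftrightarrow> c \<noteq> 0 \<and> vge v d (v c)"
  using vge_divide_iff[of c d 0] by auto

lemma ballf_m2one: "ballf \<beta> k m2one = 0"
  by (simp add: ballf_def m2one_def)

lemma ballf_weyl: "ballf \<beta> k weyl = (if vge v \<beta> k then 1 else 0)"
  by (simp add: ballf_def weyl_def GL2_def)

lemma inball_center_close:
  assumes "inball \<gamma> k x" "inball \<gamma>' k x"
  shows "vge v (\<gamma>' - \<gamma>) k"
proof -
  obtain a b c d where x: "x = (a, b, c, d)" by (cases x rule: prod_cases4)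
  have "vge v ((d / c - \<gamma>) - (d / c - \<gamma>')) k"
    by (rule vge_diff) (use assms x in simp_all)
  then show ?thesis by simp
qed

lemma inball_cong:
  assumes "vge v (\<beta> - \<beta>') k"
  shows "inball \<beta> k x \<longleftrightarrow> inball \<beta>' k x"
proof -
  obtain a b c d where x: "x = (a, b, c, d)" by (cases x rule: prod_cases4)
  have "vge v (d / c - \<beta>') k" if "vge v (d / c - \<beta>) k"
    using vge_add[OF that assms] by simp
  moreover have "vge v (d / c - \<beta>) k" if "vge v (d / c - \<beta>') k"
    using vge_diff[OF that assms] by simp
  ultimately show ?thesis using x by auto
qed

lemma ballf_cong: "vge v (\<beta> - \<beta>') k \<Longrightarrow> (ballf \<beta> k :: 'f m2 \<Rightarrow> 'k::field) = ballf \<beta>' k"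
  by (rule ext) (simp add: ballf_def inball_cong)

lemma inball_zero_zero_locally_constant:
  assumes g: "(a, b, c, d) \<in> GL2"
  shows "\<exists>n. \<forall>h. near v n h (a, b, c, d) \<longrightarrow> (inball 0 0 h \<longleftrightarrow> inball 0 0 (a, b, c, d))"
proof (cases "c = 0")
  case True
  then have d: "d \<noteq> 0" using g by (simp add: GL2_def)
  show ?thesis
  proof (intro exI[of _ "v d + 1"] allI impI)
    fix h :: "'f m2" assume near: "near v (v d + 1) h (a, b, c, d)"
    obtain a' b' c' d' where h: "h = (a', b', c', d')" by (cases h rule: prod_cases4)
    have c': "vge v c' (v d + 1)" using near h True by simp
    have "vge v (d' - d) (v d + 1)" using near h by simp
    then have d': "d' \<noteq> 0" "v d' = v d" using val_add_small[OF d, of "d' - d"] by auto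
    have "\<not> inball 0 0 h"
    proof
      assume "inball 0 0 h"
      then have "c' \<noteq> 0" "vge v d' (v c')" unfolding h inball_zero_zero_iff by auto
      then show False using c' d' by (simp add: vge_def)
    qed
    then show "inball 0 0 h \<longleftrightarrow> inball 0 0 (a, b, c, d)"
      using True unfolding inball_zero_zero_iff by simp
  qed
next
  case False
  show ?thesis
  proof (intro exI[of _ "v c + 1"] allI impI)
    fix h :: "'f m2" assume near: "near v (v c + 1) h (a, b, c, d)"
    obtain a' b' c' d' where h: "h = (a', b', c', d')" by (cases h rule: prod_cases4)
    have "vge v (c' - c) (v c + 1)" using near h by simp
    then have c': "c' \<noteq> 0" "v c' = v c" using val_add_small[OF False, of "c' - c"] by auto
    have "vge v (d' - d) (v c)" using near h vge_mono[of "d' - d" "v c + 1" "v c"] by simp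
    then have "vge v d' (v c) \<longleftrightarrow> vge v d (v c)" using vge_add_right_iff[of "d' - d" "v c" d] by simp
    then show "inball 0 0 h \<longleftrightarrow> inball 0 0 (a, b, c, d)"
      unfolding h inball_zero_zero_iff using c' False by simp
  qed
qed

lemma ballf_zero_IndP1: "(ballf 0 0 :: 'f m2 \<Rightarrow> 'k::field) \<in> IndP1 v"
proof -
  have "loc_const v (ballf 0 0 :: 'f m2 \<Rightarrow> 'k)"
    unfolding loc_const_def
  proof
    fix g :: "'f m2" assume g: "g \<in> GL2"
    obtain n where n: "\<forall>h. near v n h g \<longrightarrow> (inball 0 0 h \<longleftrightarrow> inball 0 0 g)"
      using inball_zero_zero_locally_constant g by (cases g rule: prod_cases4) blast
    then show "\<exists>n. \<forall>h\<in>GL2. near v n h g \<longrightarrow> (ballf 0 0 h :: 'k) = ballf 0 0 g"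
      using g unfolding ballf_def by (metis (full_types))
  qed
  moreover have "inball 0 0 (m2mult b g) \<longleftrightarrow> inball 0 0 g" if "b \<in> Bor" for b g :: "'f m2"
    using that by (cases b rule: prod_cases4; cases g rule: prod_cases4) (simp add: Bor_def)
  ultimately show ?thesis unfolding IndP1_def by (auto simp: ballf_def GL2_mult Bor_GL2)
qed

definition ball_shift :: "'f \<Rightarrow> int \<Rightarrow> 'f m2" where
  "ball_shift \<beta> k = (elem_of_val k, - \<beta>, 0, 1)"

lemma ball_shift_Bor: "ball_shift \<beta> k \<in> Bor"
  using elem_of_val by (simp add: ball_shift_def Bor_def)

lemma ballf_eq_rtrans_shift: "(ballf \<beta> k :: 'f m2 \<Rightarrow> 'k::field) = rtrans (ball_shift \<beta> k) (ballf 0 0)"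
proof (rule ext)
  fix x :: "'f m2"
  obtain a b c d where x: "x = (a, b, c, d)" by (cases x rule: prod_cases4)
  have "inball 0 0 (m2mult x (ball_shift \<beta> k)) \<longleftrightarrow> inball \<beta> k x"
  proof (cases "c = 0")
    case False
    have "(- (c * \<beta>) + d) / (c * elem_of_val k) - 0 = (d / c - \<beta>) / elem_of_val k"
      using False elem_of_val by (simp add: field_simps)
    then show ?thesis
      using False elem_of_val val_mult[OF False elem_of_val(1)]
      by (simp add: x ball_shift_def vge_divide_iff add.commute)
  qed (use elem_of_val x in \<open>simp add: ball_shift_def\<close>)
  then show "ballf \<beta> k x = rtrans (ball_shift \<beta> k) (ballf 0 0) x"
    using GL2_mult[OF _ Bor_GL2[OF ball_shift_Bor]]
    by (simp add: ballf_def rtrans_def)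
qed

lemma ballf_IndP1: "(ballf \<beta> k :: 'f m2 \<Rightarrow> 'k::field) \<in> IndP1 v"
  using IndP1_rtrans[OF ballf_zero_IndP1 Bor_GL2[OF ball_shift_Bor]]
  by (simp only: ballf_eq_rtrans_shift[of \<beta> k])

lemma inball_zero_zero_lower_unipotent:
  assumes \<epsilon>: "vge v \<epsilon> 1" and cd: "c \<noteq> 0 \<or> d \<noteq> 0"
  shows "inball 0 0 (a', b', c + d * \<epsilon>, d) \<longleftrightarrow> inball 0 0 (a, b, c, d)"
proof (cases "c \<noteq> 0 \<and> vge v d (v c)")
  case True
  have "vge v (d * \<epsilon>) (v c + 1)" using vge_mult[OF conjunct2[OF True] \<epsilon>] .
  then have "c + d * \<epsilon> \<noteq> 0 \<and> v (c + d * \<epsilon>) = v c"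
    using val_add_small[of c "d * \<epsilon>"] True by blast
  then show ?thesis using True unfolding inball_zero_zero_iff by simp
next
  case False
  then have d: "d \<noteq> 0" and "vge v c (v d + 1)" using cd by (auto simp: vge_def)
  moreover have "vge v (d * \<epsilon>) (v d + 1)"
    using vge_mult[OF vge_iff[OF d, THEN iffD2, OF order_refl] \<epsilon>] .
  ultimately have "vge v (c + d * \<epsilon>) (v d + 1)" using vge_add by blast
  then have "\<not> (c + d * \<epsilon> \<noteq> 0 \<and> vge v d (v (c + d * \<epsilon>)))"
    using d by (auto simp: vge_def)
  then show ?thesis using False unfolding inball_zero_zero_iff by blast
qed

lemma ballf_zero_lower_unipotent:
  assumes \<epsilon>: "vge v \<epsilon> 1"
  shows "rtrans (1, 0, \<epsilon>, 1) (ballf 0 0 :: 'f m2 \<Rightarrow> 'k::field) = ballf 0 0"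
proof (rule ext)
  fix x :: "'f m2"
  obtain a b c d where x: "x = (a, b, c, d)" by (cases x rule: prod_cases4)
  show "rtrans (1, 0, \<epsilon>, 1) (ballf 0 0) x = (ballf 0 0 x :: 'k)"
  proof (cases "x \<in> GL2")
    case True
    then have "c \<noteq> 0 \<or> d \<noteq> 0" by (auto simp: x GL2_def)
    then have "inball 0 0 (m2mult x (1, 0, \<epsilon>, 1)) \<longleftrightarrow> inball 0 0 x"
      unfolding x m2mult.simps using inball_zero_zero_lower_unipotent[OF \<epsilon>] by simp
    moreover have "m2mult x (1, 0, \<epsilon>, 1) \<in> GL2"
      using GL2_mult[OF True, of "(1, 0, \<epsilon>, 1)"] by (simp add: GL2_def)
    ultimately show ?thesis
      unfolding rtrans_apply[OF True] ballf_def using True by presburger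
  qed (simp add: ballf_def rtrans_outside)
qed

lemma inball_subdivide:
  assumes R: "\<forall>r\<in>R. vge v r 0" "\<forall>x. vge v x 0 \<longrightarrow> (\<exists>r\<in>R. vge v (x - r) 1)"
  shows "inball \<beta> k x \<longleftrightarrow> (\<exists>r\<in>R. inball (\<beta> + elem_of_val k * r) (k + 1) x)"
proof -
  obtain a b c d where x: "x = (a, b, c, d)" by (cases x rule: prod_cases4)
  let ?\<pi> = "elem_of_val k"
  have "vge v (d / c - \<beta>) k \<longleftrightarrow> (\<exists>r\<in>R. vge v (d / c - (\<beta> + ?\<pi> * r)) (k + 1))"
  proof
    assume "vge v (d / c - \<beta>) k"
    then have "vge v ((d / c - \<beta>) / ?\<pi>) 0"
      using vge_divide_iff[of ?\<pi> "d / c - \<beta>" 0] elem_of_val by simp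
    then obtain r where r: "r \<in> R" "vge v ((d / c - \<beta>) / ?\<pi> - r) 1" using R(2) by blast
    have "vge v (?\<pi> * ((d / c - \<beta>) / ?\<pi> - r)) (k + 1)"
      using vge_mult[OF _ r(2), of ?\<pi> k] elem_of_val by (simp add: vge_def)
    moreover have "?\<pi> * ((d / c - \<beta>) / ?\<pi> - r) = d / c - (\<beta> + ?\<pi> * r)"
      using elem_of_val by (simp add: field_simps)
    ultimately show "\<exists>r\<in>R. vge v (d / c - (\<beta> + ?\<pi> * r)) (k + 1)" using r(1) by auto
  next
    assume "\<exists>r\<in>R. vge v (d / c - (\<beta> + ?\<pi> * r)) (k + 1)"
    then obtain r where r: "r \<in> R" "vge v (d / c - (\<beta> + ?\<pi> * r)) (k + 1)" by blast
    have "vge v (?\<pi> * r) k"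
      using vge_mult[of ?\<pi> k r 0] elem_of_val R(1) r(1) by (simp add: vge_def)
    moreover have "vge v (d / c - (\<beta> + ?\<pi> * r)) k" using vge_mono[OF r(2)] by simp
    ultimately have "vge v ((d / c - (\<beta> + ?\<pi> * r)) + ?\<pi> * r) k"
      by (intro vge_add)
    then show "vge v (d / c - \<beta>) k" by simp
  qed
  then show ?thesis using x by auto
qed

text \<open>S is a set of functions, so residue classes giving the same subball count once; distinct
  subballs are disjoint.\<close>

lemma ballf_eq_sum_subballs:
  fixes \<beta> :: 'f and k :: int
  assumes R: "finite R" "\<forall>r\<in>R. vge v r 0" "\<forall>x. vge v x 0 \<longrightarrow> (\<exists>r\<in>R. vge v (x - r) 1)"
  defines "S \<equiv> (\<lambda>r. ballf (\<beta> + elem_of_val k * r) (k + 1)) ` R"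
  shows "(ballf \<beta> k :: 'f m2 \<Rightarrow> 'k::field) x = (\<Sum>b\<in>S. b x)"
proof (cases "x \<in> GL2 \<and> inball \<beta> k x")
  case True
  then obtain r where r: "r \<in> R" "inball (\<beta> + elem_of_val k * r) (k + 1) x"
    using inball_subdivide[OF R(2,3)] by blast
  define b\<^sub>0 where "b\<^sub>0 = (ballf (\<beta> + elem_of_val k * r) (k + 1) :: 'f m2 \<Rightarrow> 'k)"
  have b\<^sub>0: "b\<^sub>0 \<in> S" "b\<^sub>0 x = 1" using r True by (auto simp: S_def b\<^sub>0_def ballf_def)
  have others: "b x = 0" if b: "b \<in> S - {b\<^sub>0}" for b
  proof (rule ccontr)
    assume "b x \<noteq> 0"
    moreover obtain r' where r': "b = ballf (\<beta> + elem_of_val k * r') (k + 1)"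
      using b unfolding S_def by blast
    ultimately have "inball (\<beta> + elem_of_val k * r') (k + 1) x"
      by (simp add: ballf_def split: if_splits)
    then have "b = b\<^sub>0"
      unfolding r' b\<^sub>0_def by (intro ballf_cong inball_center_close[OF r(2)])
    then show False using b by blast
  qed
  have "(\<Sum>b\<in>S. b x) = b\<^sub>0 x + (\<Sum>b\<in>S - {b\<^sub>0}. b x)"
    using sum.remove[of S b\<^sub>0 "\<lambda>b. b x"] b\<^sub>0(1) R(1) by (simp add: S_def)
  also have "(\<Sum>b\<in>S - {b\<^sub>0}. b x) = 0"
    using others by (intro sum.neutral) blast
  finally show ?thesis using True b\<^sub>0(2) by (simp add: ballf_def)
next
  case False
  have "b x = 0" if b: "b \<in> S" for b
  proof -
    obtain r where "r \<in> R" "b = ballf (\<beta> + elem_of_val k * r) (k + 1)"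
      using b unfolding S_def by blast
    then show ?thesis
      using False inball_subdivide[OF R(2,3), of \<beta> k x] by (auto simp: ballf_def)
  qed
  then have "(\<Sum>b\<in>S. b x) = 0" by (intro sum.neutral) blast
  then show ?thesis using False by (simp add: ballf_def)
qed

lemma nested_balls_converge:
  fixes c :: "nat \<Rightarrow> 'f"
  assumes step: "\<And>j. vge v (c (Suc j) - c j) (k + int j)"
  shows "\<exists>l. \<forall>j. vge v (c j - l) (k + int j)"
proof -
  have tail: "vge v (c (j + t) - c j) (k + int j)" for j t
  proof (induction t)
    case (Suc t)
    have "vge v (c (Suc (j + t)) - c (j + t)) (k + int j)"
      using vge_mono[OF step[of "j + t"]] by simp
    then have "vge v ((c (Suc (j + t)) - c (j + t)) + (c (j + t) - c j)) (k + int j)"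
      using vge_add Suc.IH by blast
    then show ?case by simp
  qed simp
  have close: "j \<le> i \<Longrightarrow> vge v (c i - c j) (k + int j)" for i j
    using tail[of j "i - j"] by simp
  have "\<forall>n. \<exists>N. \<forall>i\<ge>N. \<forall>j\<ge>N. vge v (c i - c j) n"
  proof
    fix n
    define N where "N = nat (n - k)"
    have near_N: "vge v (c i - c N) n" if "N \<le> i" for i
      using vge_mono[OF close[OF that]] by (simp add: N_def)
    have "vge v (c i - c j) n" if "N \<le> i" "N \<le> j" for i j
      using vge_diff[OF near_N near_N, of i j] that by simp
    then show "\<exists>N. \<forall>i\<ge>N. \<forall>j\<ge>N. vge v (c i - c j) n" by blast
  qed
  then obtain l where l: "\<forall>n. \<exists>N. \<forall>i\<ge>N. vge v (c i - l) n"
    using cauchy_converges by blast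
  have "vge v (c j - l) (k + int j)" for j
  proof -
    obtain N where "\<forall>i\<ge>N. vge v (c i - l) (k + int j)" using l by blast
    then have "vge v (c (max N j) - l) (k + int j)" by simp
    moreover have "vge v (c (max N j) - c j) (k + int j)" using close[of j "max N j"] by simp
    ultimately have "vge v ((c (max N j) - l) - (c (max N j) - c j)) (k + int j)"
      by (rule vge_diff)
    then show ?thesis by simp
  qed
  then show ?thesis by blast
qed

text \<open>Compactness of the balls of F: a property of balls that is inherited from the residue
  classes of a ball and holds for all sufficiently small balls around each point holds for all
  balls. Otherwise a nested sequence of bad balls shrinks to a point, by completeness.\<close>

lemma ball_induct:
  fixes Q :: "'f \<Rightarrow> int \<Rightarrow> bool"
  assumes R: "\<forall>r\<in>R. vge v r 0"
    and cong: "\<And>\<beta> \<beta>' k. vge v (\<beta> - \<beta>') k \<Longrightarrow> Q \<beta> k \<Longrightarrow> Q \<beta>' k"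
    and subdivide: "\<And>\<beta> k. \<forall>r\<in>R. Q (\<beta> + elem_of_val k * r) (k + 1) \<Longrightarrow> Q \<beta> k"
    and small: "\<And>y. \<exists>n. \<forall>k\<ge>n. Q y k"
  shows "Q \<beta>\<^sub>0 k\<^sub>0"
proof (rule ccontr)
  assume bad: "\<not> Q \<beta>\<^sub>0 k\<^sub>0"
  have "\<exists>c. \<forall>j. (\<not> Q (c j) (k\<^sub>0 + int j) \<and> (j = 0 \<longrightarrow> c j = \<beta>\<^sub>0)) \<and>
      (\<exists>r\<in>R. c (Suc j) = c j + elem_of_val (k\<^sub>0 + int j) * r)"
  proof (rule dependent_nat_choice)
    fix \<beta> j assume "\<not> Q \<beta> (k\<^sub>0 + int j) \<and> (j = 0 \<longrightarrow> \<beta> = \<beta>\<^sub>0)"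
    then obtain r where "r \<in> R" "\<not> Q (\<beta> + elem_of_val (k\<^sub>0 + int j) * r) (k\<^sub>0 + int j + 1)"
      using subdivide[of \<beta> "k\<^sub>0 + int j"] by blast
    moreover have "k\<^sub>0 + int (Suc j) = k\<^sub>0 + int j + 1" by simp
    ultimately show "\<exists>\<beta>'. (\<not> Q \<beta>' (k\<^sub>0 + int (Suc j)) \<and> (Suc j = 0 \<longrightarrow> \<beta>' = \<beta>\<^sub>0)) \<and>
        (\<exists>r\<in>R. \<beta>' = \<beta> + elem_of_val (k\<^sub>0 + int j) * r)"
      by (intro exI[of _ "\<beta> + elem_of_val (k\<^sub>0 + int j) * r"]) (auto simp: ac_simps)
  qed (use bad in auto)
  then obtain c where c: "\<And>j. \<not> Q (c j) (k\<^sub>0 + int j)"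
    and step: "\<And>j. \<exists>r\<in>R. c (Suc j) = c j + elem_of_val (k\<^sub>0 + int j) * r"
    by blast
  have "vge v (c (Suc j) - c j) (k\<^sub>0 + int j)" for j
  proof -
    obtain r where "r \<in> R" "c (Suc j) = c j + elem_of_val (k\<^sub>0 + int j) * r" using step by blast
    then show ?thesis
      using vge_mult[of "elem_of_val (k\<^sub>0 + int j)" "k\<^sub>0 + int j" r 0] elem_of_val R
      by (simp add: vge_def)
  qed
  then obtain l where l: "\<And>j. vge v (c j - l) (k\<^sub>0 + int j)"
    using nested_balls_converge by blast
  obtain n where n: "\<forall>k\<ge>n. Q l k" using small by blast
  define j where "j = nat (n - k\<^sub>0)"
  have "Q l (k\<^sub>0 + int j)" using n by (simp add: j_def)
  then have "Q (c j) (k\<^sub>0 + int j)" using cong l vge_diff_commute by blast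
  then show False using c by blast
qed

lemma IndP1_constant_on_small_balls:
  assumes f: "f \<in> IndP1 v"
  shows "\<exists>n. \<forall>k\<ge>n. (\<lambda>x. f x * ballf y k x) = (\<lambda>x. f (chart y) * ballf y k x)"
proof -
  obtain n where n: "\<forall>x\<in>GL2. near v n x (chart y) \<longrightarrow> f x = f (chart y)"
    using IndP1_locally_constant[OF f chart_GL2] by blast
  have "f x * ballf y k x = f (chart y) * ballf y k x" if "n \<le> k" for k x
  proof (cases "x \<in> GL2 \<and> inball y k x")
    case True
    obtain a b c d where x: "x = (a, b, c, d)" by (cases x rule: prod_cases4)
    then have "c \<noteq> 0" "vge v (d / c - y) k" using True by auto
    then have "f x = f (chart (d / c))" and "near v n (chart (d / c)) (chart y)"
      using IndP1_eq_chart[OF f] True x vge_mono[OF _ that] by (auto simp: near_chart)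
    then show ?thesis using n chart_GL2 by simp
  qed (auto simp: ballf_def)
  then show ?thesis by blast
qed

text \<open>Far out in the affine chart means close to the point at infinity, the coset of 1, where
  f vanishes.\<close>

lemma kappa1_supported_in_ball:
  assumes f: "f \<in> kappa1 v"
  shows "\<exists>k. (\<lambda>x. f x * ballf 0 k x) = f"
proof -
  have fI: "f \<in> IndP1 v" and f1: "f m2one = 0" using f by (auto simp: kappa1_iff)
  obtain n where n: "\<forall>x\<in>GL2. near v n x m2one \<longrightarrow> f x = f m2one"
    using IndP1_locally_constant[OF fI m2one_GL2] by blast
  have "f x = 0" if "x \<in> GL2" "\<not> inball 0 (1 - n) x" for x
  proof -
    obtain a b c d where x: "x = (a, b, c, d)" by (cases x rule: prod_cases4)
    show ?thesis
    proof (cases "c = 0")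
      case True
      then show ?thesis using IndP1_upper_triangular[OF fI] that x f1 by simp
    next
      case False
      then have y: "d / c \<noteq> 0" "v (d / c) \<le> - n" using that x by (auto simp: vge_def)
      have G: "(1, 0, c / d, 1) \<in> GL2" by (simp add: GL2_def)
      have "near v n (1, 0, c / d, 1) m2one"
        using y val_inverse[of "d / c"] by (simp add: m2one_def vge_def)
      then have "f (1, 0, c / d, 1) = 0" using n G f1 by simp
      moreover have "f (1, 0, c / d, 1) = f (chart (d / c))"
        using IndP1_eq_chart[OF fI G] y by simp
      ultimately show ?thesis using IndP1_eq_chart[OF fI] that x False by simp
    qed
  qed
  then have "f x * ballf 0 (1 - n) x = f x" for x
    using IndP1_outside[OF fI] by (cases "x \<in> GL2") (auto simp: ballf_def)
  then show ?thesis by blast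
qed

end

section \<open>Extending P-maps from kappa1 to Ind\<close>

locale smooth_gl2_rep = local_field v p for v :: "'f::field \<Rightarrow> int" and p +
  fixes scale :: "'k::field \<Rightarrow> 'w::ab_group_add \<Rightarrow> 'w" and act :: "'f m2 \<Rightarrow> 'w \<Rightarrow> 'w"
  assumes smooth_rep: "smooth_rep v scale act"
begin

lemma act_add: "g \<in> GL2 \<Longrightarrow> act g (x + y) = act g x + act g y"
  and act_scale: "g \<in> GL2 \<Longrightarrow> act g (scale c x) = scale c (act g x)"
  and act_m2one [simp]: "act m2one x = x"
  and act_mult: "g \<in> GL2 \<Longrightarrow> h \<in> GL2 \<Longrightarrow> act (m2mult g h) x = act g (act h x)"
  and act_smooth: "\<exists>n. \<forall>g\<in>GL2. near v n g m2one \<longrightarrow> act g x = x"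
  using smooth_rep unfolding smooth_rep_def by blast+

lemma act_smooth_ge_1: "\<exists>n\<ge>1. \<forall>g\<in>GL2. near v n g m2one \<longrightarrow> act g x = x"
proof -
  obtain n where "\<forall>g\<in>GL2. near v n g m2one \<longrightarrow> act g x = x" using act_smooth by blast
  then show ?thesis
    using near_mono[of "max n 1" _ _ n] by (intro exI[of _ "max n 1"]) auto
qed

lemma act_zero: "g \<in> GL2 \<Longrightarrow> act g 0 = 0"
  using act_add[of g 0 0] by simp

lemma scale_zero: "scale c 0 = 0"
  and scale_add: "scale c (x + y) = scale c x + scale c y"
  using smooth_rep module.scale_zero_right module.scale_right_distrib
  unfolding smooth_rep_def by blast+

end

locale kappa1_hom = smooth_gl2_rep v p scale act
  for v :: "'f::field \<Rightarrow> int" and p and scale :: "'k::field \<Rightarrow> 'w::ab_group_add \<Rightarrow> 'w"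
    and act :: "'f m2 \<Rightarrow> 'w \<Rightarrow> 'w" +
  fixes psi :: "('f m2 \<Rightarrow> 'k) \<Rightarrow> 'w"
  assumes psi: "psi \<in> HomOn Bor (kappa1 v) scale act"
begin

definition weyl_compatible :: "('f m2 \<Rightarrow> 'k) \<Rightarrow> bool" where
  "weyl_compatible f \<longleftrightarrow> f \<in> kappa1 v \<and> f weyl = 0 \<and> psi (rtrans weyl f) = act weyl (psi f)"

lemma rtrans_weyl_kappa1: "f \<in> kappa1 v \<Longrightarrow> f weyl = 0 \<Longrightarrow> rtrans weyl f \<in> kappa1 v"
  by (rule rtrans_kappa1[OF kappa1_IndP1 weyl_GL2])

lemma weyl_compatible_zero: "weyl_compatible (\<lambda>x. 0)"
  using HomOn_zero[OF psi zero_kappa1]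
  by (simp add: weyl_compatible_def zero_kappa1 rtrans_zero act_zero)

lemma weyl_compatible_add:
  assumes "weyl_compatible f" "weyl_compatible g"
  shows "weyl_compatible (\<lambda>x. f x + g x)"
proof -
  have f: "f \<in> kappa1 v" "f weyl = 0" "psi (rtrans weyl f) = act weyl (psi f)"
    and g: "g \<in> kappa1 v" "g weyl = 0" "psi (rtrans weyl g) = act weyl (psi g)"
    using assms by (simp_all add: weyl_compatible_def)
  have "psi (rtrans weyl (\<lambda>x. f x + g x)) = psi (rtrans weyl f) + psi (rtrans weyl g)"
    unfolding rtrans_add
    by (rule HomOn_add[OF psi rtrans_weyl_kappa1[OF f(1,2)] rtrans_weyl_kappa1[OF g(1,2)]])
  also have "\<dots> = act weyl (psi f + psi g)" using f(3) g(3) act_add[OF weyl_GL2] by simp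
  also have "\<dots> = act weyl (psi (\<lambda>x. f x + g x))" using HomOn_add[OF psi f(1) g(1)] by simp
  finally show ?thesis using f g kappa1_add by (simp add: weyl_compatible_def)
qed

lemma weyl_compatible_cmult:
  assumes "weyl_compatible f"
  shows "weyl_compatible (\<lambda>x. c * f x)"
proof -
  have f: "f \<in> kappa1 v" "f weyl = 0" "psi (rtrans weyl f) = act weyl (psi f)"
    using assms by (simp_all add: weyl_compatible_def)
  have "psi (rtrans weyl (\<lambda>x. c * f x)) = scale c (psi (rtrans weyl f))"
    unfolding rtrans_cmult by (rule HomOn_cmult[OF psi rtrans_weyl_kappa1[OF f(1,2)]])
  also have "\<dots> = act weyl (psi (\<lambda>x. c * f x))"
    using f(3) act_scale[OF weyl_GL2] HomOn_cmult[OF psi f(1)] by simp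
  finally show ?thesis using f kappa1_cmult by (simp add: weyl_compatible_def)
qed

lemma weyl_compatible_sum:
  "finite S \<Longrightarrow> (\<And>b. b \<in> S \<Longrightarrow> weyl_compatible (F b)) \<Longrightarrow> weyl_compatible (\<lambda>x. \<Sum>b\<in>S. F b x)"
  by (induction S rule: finite_induct) (simp_all add: weyl_compatible_zero weyl_compatible_add)

text \<open>For y \<noteq> 0 and k large, weyl * ball_shift y k = b * n with b in the Borel and n lower
  unipotent and close to 1; n fixes ballf 0 0 and, by smoothness, also psi (ballf 0 0).\<close>

lemma weyl_compatible_small_ball:
  assumes m: "1 \<le> m" "\<forall>g\<in>GL2. near v m g m2one \<longrightarrow> act g (psi (ballf 0 0)) = psi (ballf 0 0)"
    and y: "y \<noteq> 0" and k: "v y + m \<le> k"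
  shows "weyl_compatible (ballf y k)"
proof -
  define \<epsilon> where "\<epsilon> = - elem_of_val k / y"
  define n :: "'f m2" where "n = (1, 0, \<epsilon>, 1)"
  define b :: "'f m2" where "b = (elem_of_val k / y, 1, 0, - y)"
  have "\<epsilon> \<noteq> 0" "v \<epsilon> = k - v y"
    using y elem_of_val by (simp_all add: \<epsilon>_def val_divide val_uminus)
  then have \<epsilon>1: "vge v \<epsilon> 1" and n_near: "near v m n m2one"
    using k m(1) by (simp_all add: vge_def n_def m2one_def)
  have nG: "n \<in> GL2" by (simp add: n_def GL2_def)
  have bB: "b \<in> Bor" using y elem_of_val by (simp add: b_def Bor_def)
  have bG: "b \<in> GL2" using Bor_GL2[OF bB] .
  have shiftG: "ball_shift y k \<in> GL2" using Bor_GL2[OF ball_shift_Bor] .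
  have factor: "m2mult weyl (ball_shift y k) = m2mult b n"
    using y by (simp add: weyl_def ball_shift_def b_def n_def \<epsilon>_def)
  have e_kappa1: "(ballf 0 0 :: 'f m2 \<Rightarrow> 'k) \<in> kappa1 v"
    by (simp add: kappa1_iff ballf_zero_IndP1 ballf_m2one)
  have "rtrans weyl (ballf y k) = rtrans weyl (rtrans (ball_shift y k) (ballf 0 0 :: 'f m2 \<Rightarrow> 'k))"
    by (simp only: ballf_eq_rtrans_shift[of y k])
  also have "\<dots> = rtrans b (rtrans n (ballf 0 0))" by (simp add: rtrans_rtrans factor bG)
  also have "\<dots> = rtrans b (ballf 0 0)"
    unfolding n_def using ballf_zero_lower_unipotent[OF \<epsilon>1, where 'k = 'k] by simp
  finally have "psi (rtrans weyl (ballf y k)) = act b (psi (ballf 0 0))"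
    using HomOn_rtrans[OF psi bB e_kappa1] by simp
  also have "\<dots> = act b (act n (psi (ballf 0 0)))" using m(2) nG n_near by simp
  also have "\<dots> = act weyl (act (ball_shift y k) (psi (ballf 0 0)))"
    using factor by (simp add: act_mult[symmetric] bG nG shiftG)
  also have "\<dots> = act weyl (psi (ballf y k))"
    using HomOn_rtrans[OF psi ball_shift_Bor e_kappa1] by (simp only: ballf_eq_rtrans_shift[of y k])
  finally show ?thesis
    using y k m(1) by (simp add: weyl_compatible_def kappa1_iff ballf_IndP1 ballf_m2one ballf_weyl vge_def)
qed

lemma weyl_compatible_if_vanishes:
  assumes f: "f \<in> kappa1 v" and fw: "f weyl = 0"
  shows "weyl_compatible f"
proof -
  have fI: "f \<in> IndP1 v" using f kappa1_IndP1 by blast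
  obtain m where m: "1 \<le> m" "\<forall>g\<in>GL2. near v m g m2one \<longrightarrow> act g (psi (ballf 0 0)) = psi (ballf 0 0)"
    using act_smooth_ge_1 by blast
  obtain R where R: "finite R" "\<forall>r\<in>R. vge v r 0" "\<forall>x. vge v x 0 \<longrightarrow> (\<exists>r\<in>R. vge v (x - r) 1)"
    using finite_residue_representatives by blast
  have "weyl_compatible (\<lambda>x. f x * ballf \<beta> k x)" for \<beta> k
  proof (induction \<beta> k rule: ball_induct[OF R(2)])
    case (1 \<beta> \<beta>' k)
    then show ?case using ballf_cong[of \<beta> \<beta>' k, where 'k = 'k] by simp
  next
    case (2 \<beta> k)
    let ?S = "(\<lambda>r. ballf (\<beta> + elem_of_val k * r) (k + 1)) ` R"
    have "weyl_compatible (\<lambda>x. \<Sum>b\<in>?S. f x * b x)"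
      using 2 R(1) by (intro weyl_compatible_sum) auto
    moreover have "(\<lambda>x. f x * ballf \<beta> k x) = (\<lambda>x. \<Sum>b\<in>?S. f x * b x)"
      using ballf_eq_sum_subballs[OF R, of \<beta> k, where 'k = 'k] by (simp add: sum_distrib_left)
    ultimately show ?case by simp
  next
    case (3 y)
    obtain n where n: "\<forall>k\<ge>n. (\<lambda>x. f x * ballf y k x) = (\<lambda>x. f (chart y) * ballf y k x)"
      using IndP1_constant_on_small_balls[OF fI] by blast
    show ?case
    proof (cases "y = 0")
      case True
      then show ?thesis
        using n fw weyl_compatible_zero by (intro exI[of _ n]) (auto simp: chart_zero)
    next
      case False
      then show ?thesis
        using n weyl_compatible_cmult[OF weyl_compatible_small_ball[OF m False]]
        by (intro exI[of _ "max n (v y + m)"]) auto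
    qed
  qed
  moreover obtain k where "(\<lambda>x. f x * ballf 0 k x) = f"
    using kappa1_supported_in_ball[OF f] by blast
  ultimately show ?thesis by metis
qed

text \<open>By the Bruhat decomposition g = b1 weyl b2 with b1, b2 in the Borel it suffices to treat
  g = weyl.\<close>

lemma psi_rtrans_if_vanishes:
  assumes g: "g \<in> GL2" and h: "h \<in> kappa1 v" and hg: "h g = 0"
  shows "psi (rtrans g h) = act g (psi h)"
proof -
  obtain a b c d where g_eq: "g = (a, b, c, d)" by (cases g rule: prod_cases4)
  show ?thesis
  proof (cases "c = 0")
    case True
    then have "g \<in> Bor" using g unfolding g_eq True by (intro Bor_iff_GL2[THEN iffD2])
    then show ?thesis using HomOn_rtrans[OF psi _ h] by blast
  next
    case False
    define b\<^sub>1 :: "'f m2" where "b\<^sub>1 = (- (a * d - b * c) / c, a / c, 0, 1)"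
    define b\<^sub>2 :: "'f m2" where "b\<^sub>2 = (c, d, 0, 1)"
    have g_bruhat: "g = m2mult b\<^sub>1 (m2mult weyl b\<^sub>2)" and b\<^sub>1: "b\<^sub>1 \<in> Bor" and b\<^sub>2: "b\<^sub>2 \<in> Bor"
      using bruhat_decomposition[OF g[unfolded g_eq] False] by (simp_all add: g_eq b\<^sub>1_def b\<^sub>2_def)
    have wb\<^sub>2: "m2mult weyl b\<^sub>2 \<in> GL2" using GL2_mult[OF weyl_GL2 Bor_GL2[OF b\<^sub>2]] .
    define h\<^sub>2 where "h\<^sub>2 = rtrans b\<^sub>2 h"
    have h\<^sub>2: "h\<^sub>2 \<in> kappa1 v" using kappa1_rtrans_Bor[OF b\<^sub>2 h] by (simp add: h\<^sub>2_def)
    have "h\<^sub>2 weyl = h g"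
      using IndP1_left_invariant[OF kappa1_IndP1[OF h] b\<^sub>1 wb\<^sub>2] g_bruhat
      by (simp add: h\<^sub>2_def rtrans_apply)
    then have h\<^sub>2_weyl: "h\<^sub>2 weyl = 0" using hg by simp
    then have "psi (rtrans weyl h\<^sub>2) = act weyl (act b\<^sub>2 (psi h))"
      using weyl_compatible_if_vanishes[OF h\<^sub>2] HomOn_rtrans[OF psi b\<^sub>2 h]
      by (simp add: weyl_compatible_def h\<^sub>2_def)
    moreover have w_h\<^sub>2: "rtrans weyl h\<^sub>2 \<in> kappa1 v" by (rule rtrans_weyl_kappa1[OF h\<^sub>2 h\<^sub>2_weyl])
    moreover have "rtrans g h = rtrans b\<^sub>1 (rtrans weyl h\<^sub>2)"
      by (simp add: g_bruhat h\<^sub>2_def rtrans_rtrans Bor_GL2[OF b\<^sub>1])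
    ultimately show ?thesis
      using HomOn_rtrans[OF psi b\<^sub>1 w_h\<^sub>2] g_bruhat
      by (simp add: act_mult Bor_GL2[OF b\<^sub>1] Bor_GL2[OF b\<^sub>2] wb\<^sub>2)
  qed
qed

text \<open>The choice of t does not matter by psi_rtrans_if_vanishes (see psi_ext_eq); the value
  for an f vanishing nowhere is irrelevant.\<close>

definition psi_ext :: "('f m2 \<Rightarrow> 'k) \<Rightarrow> 'w" where
  "psi_ext f = (let t = SOME t. t \<in> GL2 \<and> f t = 0 in act (m2inv t) (psi (rtrans t f)))"

lemma psi_ext_eq:
  assumes f: "f \<in> IndP1 v" and t: "t \<in> GL2" "f t = 0"
  shows "psi_ext f = act (m2inv t) (psi (rtrans t f))"
proof -
  have indep: "act (m2inv s) (psi (rtrans s f)) = act (m2inv t) (psi (rtrans t f))"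
    if s: "s \<in> GL2" "f s = 0" for s
  proof -
    define g where "g = m2mult t (m2inv s)"
    have g: "g \<in> GL2" using GL2_mult[OF t(1) m2inv_GL2[OF s(1)]] by (simp add: g_def)
    have gs: "m2mult g s = t" by (simp add: g_def m2mult_assoc m2inv_mult[OF s(1)])
    have "psi (rtrans t f) = psi (rtrans g (rtrans s f))" by (simp add: rtrans_rtrans g gs)
    also have "\<dots> = act g (psi (rtrans s f))"
      using psi_rtrans_if_vanishes[OF g rtrans_kappa1[OF f s]] t(2) gs
      by (simp add: rtrans_apply g)
    finally have "act (m2inv t) (psi (rtrans t f)) = act (m2mult (m2inv t) g) (psi (rtrans s f))"
      by (simp add: act_mult m2inv_GL2[OF t(1)] g)
    also have "m2mult (m2inv t) g = m2inv s"
      by (simp add: g_def m2mult_assoc[symmetric] m2inv_mult[OF t(1)])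
    finally show ?thesis by simp
  qed
  have "\<exists>t. t \<in> GL2 \<and> f t = 0" using t by blast
  from someI_ex[OF this] show ?thesis unfolding psi_ext_def Let_def by (intro indep) auto
qed

lemma psi_ext_kappa1:
  assumes "f \<in> kappa1 v"
  shows "psi_ext f = psi f"
proof -
  have f: "f \<in> IndP1 v" "f m2one = 0" using assms by (simp_all add: kappa1_iff)
  have "rtrans m2one f = f" using rtrans_m2one[of f] IndP1_outside[OF f(1)] by blast
  moreover have "m2inv m2one = (m2one :: 'f m2)" by (rule m2inv_unique) simp_all
  ultimately show ?thesis using psi_ext_eq[OF f(1) m2one_GL2 f(2)] by simp
qed

lemma psi_ext_add:
  assumes f: "f \<in> IndP1 v" and g: "g \<in> IndP1 v" and t: "t \<in> GL2" "f t = 0" "g t = 0"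
  shows "psi_ext (\<lambda>x. f x + g x) = psi_ext f + psi_ext g"
  using psi_ext_eq[OF IndP1_add[OF f g] t(1)] psi_ext_eq[OF f t(1,2)] psi_ext_eq[OF g t(1,3)] t
    HomOn_add[OF psi rtrans_kappa1[OF f t(1,2)] rtrans_kappa1[OF g t(1,3)]]
  by (simp add: rtrans_add act_add m2inv_GL2)

lemma psi_ext_cmult:
  assumes f: "f \<in> IndP1 v" and t: "t \<in> GL2" "f t = 0"
  shows "psi_ext (\<lambda>x. c * f x) = scale c (psi_ext f)"
  using psi_ext_eq[OF IndP1_cmult[OF f] t(1)] psi_ext_eq[OF f t] t
    HomOn_cmult[OF psi rtrans_kappa1[OF f t]]
  by (simp add: rtrans_cmult act_scale m2inv_GL2)

lemma psi_ext_rtrans: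
  assumes g: "g \<in> GL2" and f: "f \<in> IndP1 v" and t: "t \<in> GL2" "f t = 0"
  shows "psi_ext (rtrans g f) = act g (psi_ext f)"
proof -
  define s where "s = m2mult t (m2inv g)"
  have s: "s \<in> GL2" using GL2_mult[OF t(1) m2inv_GL2[OF g]] by (simp add: s_def)
  have sg: "m2mult s g = t" by (simp add: s_def m2mult_assoc m2inv_mult[OF g])
  have "psi_ext (rtrans g f) = act (m2inv s) (psi (rtrans t f))"
    using psi_ext_eq[OF IndP1_rtrans[OF f g] s] t sg by (simp add: rtrans_apply rtrans_rtrans s)
  also have "m2inv s = m2mult g (m2inv t)"
    by (rule m2inv_unique[OF s])
      (simp add: s_def m2mult_assoc m2inv_mult_cancel[OF t(1)] m2mult_inv[OF g])
  finally show ?thesis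
    using psi_ext_eq[OF f t] by (simp add: act_mult g m2inv_GL2[OF t(1)])
qed

lemma psi_ext_split:
  assumes F: "F \<in> IndP1 v" and a: "a \<in> IndP1 v" and t: "t \<in> GL2" "F t = 0"
  shows "psi_ext F = psi_ext (\<lambda>x. F x * a x) + psi_ext (\<lambda>x. F x * (oneG x - a x))"
proof -
  have "F = (\<lambda>x. F x * a x + F x * (oneG x - a x))"
    using IndP1_outside[OF F] by (auto simp: oneG_def algebra_simps)
  then show ?thesis
    using psi_ext_add[OF IndP1_mult[OF F a] IndP1_mult[OF F IndP1_diff[OF oneG_IndP1 a]] t(1)] t(2)
    by simp
qed

text \<open>The two summands vanish at 1 and at weyl respectively, so psi_ext is additive on them.\<close>

definition G_ext :: "('f m2 \<Rightarrow> 'k) \<Rightarrow> 'w" where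
  "G_ext f = (if f \<in> IndP1 v
     then psi_ext (\<lambda>x. f x * ballf 0 0 x) + psi_ext (\<lambda>x. f x * (oneG x - ballf 0 0 x)) else 0)"

lemma ballf_zero_complement_IndP1: "(\<lambda>x. oneG x - ballf 0 0 x) \<in> IndP1 v"
  by (rule IndP1_diff[OF oneG_IndP1 ballf_zero_IndP1])

lemma G_ext_partition:
  assumes f: "f \<in> IndP1 v" and a: "a \<in> IndP1 v"
    and t: "t \<in> GL2" "a t = 0" and s: "s \<in> GL2" "a s = 1"
  shows "G_ext f = psi_ext (\<lambda>x. f x * a x) + psi_ext (\<lambda>x. f x * (oneG x - a x))"
proof -
  define e where "e = (ballf 0 0 :: 'f m2 \<Rightarrow> 'k)"
  have e: "e \<in> IndP1 v" "(\<lambda>x. oneG x - e x) \<in> IndP1 v"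
    using ballf_zero_IndP1 ballf_zero_complement_IndP1 by (simp_all add: e_def)
  have a': "(\<lambda>x. oneG x - a x) \<in> IndP1 v" by (rule IndP1_diff[OF oneG_IndP1 a])
  have "psi_ext (\<lambda>x. f x * e x) =
      psi_ext (\<lambda>x. f x * e x * a x) + psi_ext (\<lambda>x. f x * e x * (oneG x - a x))"
    using psi_ext_split[OF IndP1_mult[OF f e(1)] a m2one_GL2] by (simp add: e_def ballf_m2one)
  moreover have "psi_ext (\<lambda>x. f x * (oneG x - e x)) =
      psi_ext (\<lambda>x. f x * (oneG x - e x) * a x) + psi_ext (\<lambda>x. f x * (oneG x - e x) * (oneG x - a x))"
    using psi_ext_split[OF IndP1_mult[OF f e(2)] a weyl_GL2]
    by (simp add: e_def ballf_weyl oneG_def)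
  moreover have "psi_ext (\<lambda>x. f x * a x) =
      psi_ext (\<lambda>x. f x * a x * e x) + psi_ext (\<lambda>x. f x * a x * (oneG x - e x))"
    using psi_ext_split[OF IndP1_mult[OF f a] e(1) t(1)] t(2) by simp
  moreover have "psi_ext (\<lambda>x. f x * (oneG x - a x)) =
      psi_ext (\<lambda>x. f x * (oneG x - a x) * e x) + psi_ext (\<lambda>x. f x * (oneG x - a x) * (oneG x - e x))"
    using psi_ext_split[OF IndP1_mult[OF f a'] e(1) s(1)] s by (simp add: oneG_def)
  \<comment> \<open>both sides are the sum of the four terms f * (e or 1 - e) * (a or 1 - a)\<close>
  ultimately show ?thesis using f by (simp add: G_ext_def e_def ac_simps)
qed

lemma G_ext_rtrans:
  assumes g: "g \<in> GL2" and f: "f \<in> IndP1 v"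
  shows "G_ext (rtrans g f) = act g (G_ext f)"
proof -
  define e where "e = (ballf 0 0 :: 'f m2 \<Rightarrow> 'k)"
  have e: "e \<in> IndP1 v" "(\<lambda>x. oneG x - e x) \<in> IndP1 v"
    using ballf_zero_IndP1 ballf_zero_complement_IndP1 by (simp_all add: e_def)
  have "m2mult (m2inv g) g = m2one" "m2mult (m2mult weyl (m2inv g)) g = weyl"
    by (simp_all add: m2inv_mult[OF g] m2mult_assoc)
  then have "rtrans g e (m2inv g) = 0" "rtrans g e (m2mult weyl (m2inv g)) = 1"
    by (simp_all add: rtrans_apply m2inv_GL2[OF g] GL2_mult e_def ballf_m2one ballf_weyl)
  then have "G_ext (rtrans g f) =
      psi_ext (rtrans g (\<lambda>x. f x * e x)) + psi_ext (rtrans g (\<lambda>x. f x * (oneG x - e x)))"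
    using G_ext_partition[OF IndP1_rtrans[OF f g] IndP1_rtrans[OF e(1) g]]
      m2inv_GL2[OF g] GL2_mult[OF weyl_GL2 m2inv_GL2[OF g]]
    by (simp add: rtrans_mult rtrans_diff rtrans_oneG g)
  also have "\<dots> = act g (psi_ext (\<lambda>x. f x * e x)) + act g (psi_ext (\<lambda>x. f x * (oneG x - e x)))"
    using psi_ext_rtrans[OF g IndP1_mult[OF f e(1)] m2one_GL2]
      psi_ext_rtrans[OF g IndP1_mult[OF f e(2)] weyl_GL2]
    by (simp add: e_def ballf_m2one ballf_weyl oneG_def)
  also have "\<dots> = act g (G_ext f)" using f by (simp add: G_ext_def e_def act_add[OF g])
  finally show ?thesis .
qed

lemma G_ext_add:
  assumes f: "f \<in> IndP1 v" and g: "g \<in> IndP1 v"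
  shows "G_ext (\<lambda>x. f x + g x) = G_ext f + G_ext g"
proof -
  define e where "e = (ballf 0 0 :: 'f m2 \<Rightarrow> 'k)"
  have e: "e \<in> IndP1 v" "(\<lambda>x. oneG x - e x) \<in> IndP1 v"
    using ballf_zero_IndP1 ballf_zero_complement_IndP1 by (simp_all add: e_def)
  have "psi_ext (\<lambda>x. (f x + g x) * e x) = psi_ext (\<lambda>x. f x * e x) + psi_ext (\<lambda>x. g x * e x)"
    using psi_ext_add[OF IndP1_mult[OF f e(1)] IndP1_mult[OF g e(1)] m2one_GL2]
    by (simp add: e_def ballf_m2one distrib_right)
  moreover have "psi_ext (\<lambda>x. (f x + g x) * (oneG x - e x)) =
      psi_ext (\<lambda>x. f x * (oneG x - e x)) + psi_ext (\<lambda>x. g x * (oneG x - e x))"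
    using psi_ext_add[OF IndP1_mult[OF f e(2)] IndP1_mult[OF g e(2)] weyl_GL2]
    by (simp add: e_def ballf_weyl oneG_def distrib_right)
  ultimately show ?thesis using f g IndP1_add[OF f g] by (simp add: G_ext_def e_def ac_simps)
qed

lemma G_ext_cmult:
  assumes f: "f \<in> IndP1 v"
  shows "G_ext (\<lambda>x. c * f x) = scale c (G_ext f)"
proof -
  define e where "e = (ballf 0 0 :: 'f m2 \<Rightarrow> 'k)"
  have e: "e \<in> IndP1 v" "(\<lambda>x. oneG x - e x) \<in> IndP1 v"
    using ballf_zero_IndP1 ballf_zero_complement_IndP1 by (simp_all add: e_def)
  have "psi_ext (\<lambda>x. c * f x * e x) = scale c (psi_ext (\<lambda>x. f x * e x))"
    using psi_ext_cmult[OF IndP1_mult[OF f e(1)] m2one_GL2] by (simp add: e_def ballf_m2one mult.assoc)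
  moreover have "psi_ext (\<lambda>x. c * f x * (oneG x - e x)) = scale c (psi_ext (\<lambda>x. f x * (oneG x - e x)))"
    using psi_ext_cmult[OF IndP1_mult[OF f e(2)] weyl_GL2]
    by (simp add: e_def ballf_weyl oneG_def mult.assoc)
  ultimately show ?thesis using f IndP1_cmult[OF f] by (simp add: G_ext_def e_def scale_add)
qed

lemma G_ext_HomOn: "G_ext \<in> HomOn GL2 (IndP1 v) scale act"
  unfolding HomOn_def lin_on_def
  using G_ext_add G_ext_cmult G_ext_rtrans by (auto simp: G_ext_def)

lemma G_ext_kappa1: "f \<in> kappa1 v \<Longrightarrow> G_ext f = psi f"
  using psi_ext_split[OF kappa1_IndP1 ballf_zero_IndP1 m2one_GL2] psi_ext_kappa1
  by (simp add: G_ext_def kappa1_iff)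

end

section \<open>The restriction isomorphisms\<close>

context smooth_gl2_rep
begin

definition kappa1_restrict :: "(('f m2 \<Rightarrow> 'k) \<Rightarrow> 'w) \<Rightarrow> ('f m2 \<Rightarrow> 'k) \<Rightarrow> 'w" where
  "kappa1_restrict \<Phi> f = (if f \<in> kappa1 v then \<Phi> f else 0)"

lemma kappa1_restrict_HomOn:
  "\<Phi> \<in> HomOn GL2 (IndP1 v) scale act \<Longrightarrow> kappa1_restrict \<Phi> \<in> HomOn Bor (kappa1 v) scale act"
  unfolding kappa1_restrict_def[abs_def]
  by (rule HomOn_restrict) (auto simp: kappa1_IndP1 Bor_GL2 kappa1_add kappa1_cmult kappa1_rtrans_Bor)

lemma HomOn_GL2_eqI:
  assumes \<Phi>: "\<Phi> \<in> HomOn GL2 (IndP1 v) scale act" and \<Phi>': "\<Phi>' \<in> HomOn GL2 (IndP1 v) scale act"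
    and eq: "\<And>f. f \<in> kappa1 v \<Longrightarrow> \<Phi> f = \<Phi>' f"
  shows "\<Phi> = \<Phi>'"
proof
  fix f :: "'f m2 \<Rightarrow> 'k"
  show "\<Phi> f = \<Phi>' f"
  proof (cases "f \<in> IndP1 v")
    case True
    define f\<^sub>1 where "f\<^sub>1 = (\<lambda>x. f x * ballf 0 0 x)"
    define f\<^sub>2 where "f\<^sub>2 = (\<lambda>x. f x * (oneG x - ballf 0 0 x))"
    have f\<^sub>2: "f\<^sub>2 \<in> IndP1 v"
      unfolding f\<^sub>2_def by (rule IndP1_mult[OF True IndP1_diff[OF oneG_IndP1 ballf_zero_IndP1]])
    have f\<^sub>1: "f\<^sub>1 \<in> kappa1 v"
      using IndP1_mult[OF True ballf_zero_IndP1] by (simp add: f\<^sub>1_def kappa1_iff ballf_m2one)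
    have wf\<^sub>2: "rtrans weyl f\<^sub>2 \<in> kappa1 v"
      using rtrans_kappa1[OF f\<^sub>2 weyl_GL2] by (simp add: f\<^sub>2_def ballf_weyl oneG_def)
    have "rtrans m2one f\<^sub>2 = f\<^sub>2" using rtrans_m2one[of f\<^sub>2] IndP1_outside[OF f\<^sub>2] by blast
    then have f\<^sub>2_eq: "f\<^sub>2 = rtrans weyl (rtrans weyl f\<^sub>2)" by (simp add: rtrans_rtrans weyl_weyl)
    have decompose: "\<Psi> f = \<Psi> f\<^sub>1 + act weyl (\<Psi> (rtrans weyl f\<^sub>2))"
      if \<Psi>: "\<Psi> \<in> HomOn GL2 (IndP1 v) scale act" for \<Psi>
    proof -
      have "f = (\<lambda>x. f\<^sub>1 x + f\<^sub>2 x)"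
        using IndP1_outside[OF True] by (auto simp: f\<^sub>1_def f\<^sub>2_def oneG_def algebra_simps)
      then have "\<Psi> f = \<Psi> f\<^sub>1 + \<Psi> f\<^sub>2"
        using HomOn_add[OF \<Psi> kappa1_IndP1[OF f\<^sub>1] f\<^sub>2] by simp
      also have "\<Psi> f\<^sub>2 = act weyl (\<Psi> (rtrans weyl f\<^sub>2))"
        using HomOn_rtrans[OF \<Psi> weyl_GL2 kappa1_IndP1[OF wf\<^sub>2]] f\<^sub>2_eq by simp
      finally show ?thesis .
    qed
    show ?thesis using decompose[OF \<Phi>] decompose[OF \<Phi>'] eq[OF f\<^sub>1] eq[OF wf\<^sub>2] by simp
  qed (simp add: HomOn_outside[OF \<Phi>] HomOn_outside[OF \<Phi>'])
qed

lemma kappa1_restrict_bij: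
  "bij_betw kappa1_restrict (HomOn GL2 (IndP1 v) scale act) (HomOn Bor (kappa1 v) scale act)"
proof (rule bij_betwI')
  fix \<Phi> \<Phi>' assume "\<Phi> \<in> HomOn GL2 (IndP1 v) scale act" "\<Phi>' \<in> HomOn GL2 (IndP1 v) scale act"
  then show "kappa1_restrict \<Phi> = kappa1_restrict \<Phi>' \<longleftrightarrow> \<Phi> = \<Phi>'"
    using HomOn_GL2_eqI by (metis kappa1_restrict_def)
next
  fix \<psi> assume \<psi>: "\<psi> \<in> HomOn Bor (kappa1 v) scale act"
  interpret kappa1_hom v p scale act \<psi> by unfold_locales (rule \<psi>)
  have "kappa1_restrict G_ext = \<psi>"
    using G_ext_kappa1 HomOn_outside[OF \<psi>] by (auto simp: kappa1_restrict_def)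
  then show "\<exists>\<Phi>\<in>HomOn GL2 (IndP1 v) scale act. \<psi> = kappa1_restrict \<Phi>"
    using G_ext_HomOn by metis
qed (rule kappa1_restrict_HomOn)

definition sp_lift :: "(('f m2 \<Rightarrow> 'k) \<Rightarrow> 'w) \<Rightarrow> ('f m2 \<Rightarrow> 'k) \<Rightarrow> 'w" where
  "sp_lift \<psi> f = (if f \<in> IndP1 v then \<psi> (kappa1_part f) else 0)"

lemma sp_lift_HomP_Sp:
  assumes \<psi>: "\<psi> \<in> HomOn Bor (kappa1 v) scale act"
  shows "sp_lift \<psi> \<in> HomP_Sp v scale act"
proof -
  have "sp_lift \<psi> \<in> HomOn Bor (IndP1 v) scale act"
    unfolding HomOn_def lin_on_def sp_lift_def
    using HomOn_add[OF \<psi> kappa1_part_kappa1 kappa1_part_kappa1]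
      HomOn_cmult[OF \<psi> kappa1_part_kappa1] HomOn_rtrans[OF \<psi> _ kappa1_part_kappa1]
    by (auto simp: IndP1_add IndP1_cmult IndP1_rtrans Bor_GL2 kappa1_part_add kappa1_part_cmult
        kappa1_part_rtrans_Bor)
  then show ?thesis
    using HomOn_zero[OF \<psi> zero_kappa1] oneG_IndP1
    by (simp add: HomP_Sp_def sp_lift_def kappa1_part_oneG)
qed

lemma sp_lift_bij: "bij_betw sp_lift (HomOn Bor (kappa1 v) scale act) (HomP_Sp v scale act)"
proof (rule bij_betwI')
  fix \<psi> \<psi>' assume \<psi>: "\<psi> \<in> HomOn Bor (kappa1 v) scale act" and \<psi>': "\<psi>' \<in> HomOn Bor (kappa1 v) scale act"
  have "\<psi> f = \<psi>' f" if "sp_lift \<psi> = sp_lift \<psi>'" for f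
    using fun_cong[OF that, of f] kappa1_IndP1[of f] kappa1_part_id[of f]
      HomOn_outside[OF \<psi>, of f] HomOn_outside[OF \<psi>', of f]
    by (cases "f \<in> kappa1 v") (auto simp: sp_lift_def)
  then show "sp_lift \<psi> = sp_lift \<psi>' \<longleftrightarrow> \<psi> = \<psi>'" by auto
next
  fix \<chi> assume "\<chi> \<in> HomP_Sp v scale act"
  then have \<chi>: "\<chi> \<in> HomOn Bor (IndP1 v) scale act" and \<chi>1: "\<chi> oneG = 0"
    by (simp_all add: HomP_Sp_def)
  define \<psi> where "\<psi> f = (if f \<in> kappa1 v then \<chi> f else 0)" for f
  have \<psi>: "\<psi> \<in> HomOn Bor (kappa1 v) scale act"
    unfolding \<psi>_def[abs_def] using \<chi>
    by (rule HomOn_restrict) (auto simp: kappa1_IndP1 kappa1_add kappa1_cmult kappa1_rtrans_Bor)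
  have "\<chi> f = sp_lift \<psi> f" for f
  proof (cases "f \<in> IndP1 v")
    case True
    have "f = (\<lambda>x. kappa1_part f x + f m2one * oneG x)" by (simp add: kappa1_part_def)
    then have "\<chi> f = \<chi> (kappa1_part f) + scale (f m2one) (\<chi> oneG)"
      using HomOn_add[OF \<chi> kappa1_IndP1[OF kappa1_part_kappa1[OF True]] IndP1_cmult[OF oneG_IndP1]]
        HomOn_cmult[OF \<chi> oneG_IndP1] by metis
    then show ?thesis
      using True kappa1_part_kappa1[OF True] \<chi>1 by (simp add: sp_lift_def \<psi>_def scale_zero)
  qed (simp add: sp_lift_def HomOn_outside[OF \<chi>])
  then show "\<exists>\<psi>\<in>HomOn Bor (kappa1 v) scale act. \<chi> = sp_lift \<psi>" using \<psi> by blast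
qed (rule sp_lift_HomP_Sp)

lemma HomOn_GL2_HomP_Sp_bij:
  "bij_betw (\<lambda>\<Phi> f. if f \<in> IndP1 v then \<Phi> (kappa1_part f) else 0)
     (HomOn GL2 (IndP1 v) scale act) (HomP_Sp v scale act)"
proof -
  have "sp_lift (kappa1_restrict \<Phi>) = (\<lambda>f. if f \<in> IndP1 v then \<Phi> (kappa1_part f) else 0)" for \<Phi>
    by (intro ext) (simp add: sp_lift_def kappa1_restrict_def kappa1_part_kappa1)
  then show ?thesis
    using bij_betw_trans[OF kappa1_restrict_bij sp_lift_bij] by (simp add: comp_def)
qed

end

theorem corollary5p6:
  fixes v :: "'f::field \<Rightarrow> int" and p :: nat
    and scale :: "'k::field \<Rightarrow> 'w::ab_group_add \<Rightarrow> 'w"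
    and act :: "'f m2 \<Rightarrow> 'w \<Rightarrow> 'w"
  assumes "nonarch_local_field v p"
    and "alg_closure_Fp TYPE('k) p"
    and "smooth_rep v scale act"
  shows "(\<forall>b\<in>Bor. \<forall>f\<in>(kappa1 v :: ('f m2 \<Rightarrow> 'k) set). rtrans b f \<in> kappa1 v)
    \<and> bij_betw sp_class (kappa1 v :: ('f m2 \<Rightarrow> 'k) set) (Sp v)
    \<and> bij_betw (\<lambda>\<Phi> f. if f \<in> kappa1 v then \<Phi> f else 0)
         (HomOn GL2 (IndP1 v) scale act) (HomOn Bor (kappa1 v) scale act)
    \<and> bij_betw (\<lambda>\<Phi> f. if f \<in> IndP1 v then \<Phi> (\<lambda>x. f x - f m2one * oneG x) else 0)
         (HomOn GL2 (IndP1 v) scale act) (HomP_Sp v scale act)"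
proof -
  interpret smooth_gl2_rep v p scale act
    using assms(1,3) by unfold_locales
  show ?thesis
    using kappa1_rtrans_Bor sp_class_bij kappa1_restrict_bij HomOn_GL2_HomP_Sp_bij
    unfolding kappa1_restrict_def[abs_def] kappa1_part_def by blast
qed

end
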